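(* Let $X \subset \mathbb P^3_k$ be a K3 quartic surface and $P$ a singular point of $X$. Choose coordinates with $P = [0:0:0:1]$ so that $X$ is given by $$ x_3^2 f_2(x_0,x_1,x_2) + x_3 f_3(x_0,x_1,x_2) + f_4(x_0,x_1,x_2) = 0,$$ with $f_i$ homogeneous of degree $i$ (the second, third and fourth Taylor coefficients of $X$ at $P$). Then at most $8$ lines contained in $X$ pass through $P$. Moreover, if more than $6$ lines of $X$ pass through $P$, then $f_2$ and $f_3$ have a common (nonconstant) factor; and if exactly $8$ lines of $X$ pass through $P$, then $f_2$ divides $f_3$.
   Context: $k$ is an algebraically closed field of characteristic $\neq 2,3$. A K3 quartic surface is a surface $X \subset \mathbb P^3_k$ of degree 4 whose only singularities are isolated rational double points; in particular $f_2 \not\equiv 0$ at any singular point. *)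

theory Defs
  imports "HOL-Computational_Algebra.Polynomial"
begin

text \<open>Polynomials in x0,x1,x2 over k: nested univariate polynomials
  k[x2][x1][x0], i.e. type k poly poly poly (outer variable x0, middle x1,
  innermost x2).  Quartic forms in x0..x3: k[x2][x1][x0][x3],
  i.e. type k poly poly poly poly with outermost variable x3.\<close>

type_synonym 'k pol3 = "'k poly poly poly"
type_synonym 'k pol4 = "'k poly poly poly poly"
type_synonym 'k pt = "'k \<times> 'k \<times> 'k \<times> 'k"

definition mcoeff3 :: "'k::zero pol3 \<Rightarrow> nat \<Rightarrow> nat \<Rightarrow> nat \<Rightarrow> 'k" where
  "mcoeff3 p i j l = coeff (coeff (coeff p i) j) l"

definition homogeneous3 :: "nat \<Rightarrow> 'k::zero pol3 \<Rightarrow> bool" where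
  "homogeneous3 d p \<longleftrightarrow> (\<forall>i j l. mcoeff3 p i j l \<noteq> 0 \<longrightarrow> i + j + l = d)"

definition eval3 :: "'k::comm_semiring_1 pol3 \<Rightarrow> 'k \<Rightarrow> 'k \<Rightarrow> 'k \<Rightarrow> 'k" where
  "eval3 p x0 x1 x2 = poly (poly (poly p [:[:x0:]:]) [:x1:]) x2"

definition eval4 :: "'k::comm_semiring_1 pol4 \<Rightarrow> 'k pt \<Rightarrow> 'k" where
  "eval4 F w = (case w of (x0, x1, x2, x3) \<Rightarrow> eval3 (poly F [:[:[:x3:]:]:]) x0 x1 x2)"

definition pdiff :: "nat \<Rightarrow> 'k::idom pol4 \<Rightarrow> 'k pol4" where
  "pdiff i F = (if i = 0 then map_poly pderiv F
     else if i = 1 then map_poly (map_poly pderiv) F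
     else if i = 2 then map_poly (map_poly (map_poly pderiv)) F
     else pderiv F)"

text \<open>Singular points of X = V(F) \<subseteq> P^3, as nonzero representative vectors.\<close>
definition sing_vecs :: "'k::idom pol4 \<Rightarrow> 'k pt set" where
  "sing_vecs F = {w. w \<noteq> (0, 0, 0, 0) \<and> eval4 F w = 0 \<and> (\<forall>i\<le>3. eval4 (pdiff i F) w = 0)}"

definition smul :: "'k::times \<Rightarrow> 'k pt \<Rightarrow> 'k pt" where
  "smul c w = (case w of (a, b, d, e) \<Rightarrow> (c * a, c * b, c * d, c * e))"

text \<open>The singular locus of X consists of finitely many points of P^3
  (i.e. the singularities are isolated, X being a surface).\<close>
definition finite_sing :: "'k::idom pol4 \<Rightarrow> bool" where
  "finite_sing F \<longleftrightarrow> (\<exists>S. finite S \<and> (\<forall>w\<in>sing_vecs F. \<exists>s\<in>S. \<exists>c. w = smul c s))"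

text \<open>A singular point is a double point: some second partial derivative
  does not vanish there (multiplicity exactly 2; char k \<noteq> 2).\<close>
definition double_point :: "'k::idom pol4 \<Rightarrow> 'k pt \<Rightarrow> bool" where
  "double_point F w \<longleftrightarrow> (\<exists>i\<le>3. \<exists>j\<le>3. eval4 (pdiff i (pdiff j F)) w \<noteq> 0)"

definition lin_comb :: "'k::idom \<Rightarrow> 'k pt \<Rightarrow> 'k \<Rightarrow> 'k pt \<Rightarrow> 'k pt" where
  "lin_comb s u t v = (case smul s u of (a0, a1, a2, a3) \<Rightarrow>
     (case smul t v of (b0, b1, b2, b3) \<Rightarrow> (a0 + b0, a1 + b1, a2 + b2, a3 + b3)))"

definition lin_indep2 :: "'k::idom pt \<Rightarrow> 'k pt \<Rightarrow> bool" where
  "lin_indep2 u v \<longleftrightarrow> (\<forall>s t. lin_comb s u t v = (0, 0, 0, 0) \<longrightarrow> s = 0 \<and> t = 0)"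

text \<open>A line of P^3, represented by the 2-dimensional subspace of k^4 spanned by u, v.\<close>
definition span2 :: "'k::idom pt \<Rightarrow> 'k pt \<Rightarrow> 'k pt set" where
  "span2 u v = {lin_comb s u t v | s t. True}"

definition P0 :: "'k::idom pt" where "P0 = (0, 0, 0, 1)"

definition lines_through_P :: "'k::idom pol4 \<Rightarrow> 'k pt set set" where
  "lines_through_P F = {span2 P0 u | u. lin_indep2 P0 u \<and> (\<forall>w\<in>span2 P0 u. eval4 F w = 0)}"

definition quartic :: "'k::zero pol3 \<Rightarrow> 'k pol3 \<Rightarrow> 'k pol3 \<Rightarrow> 'k pol4" where
  "quartic f2 f3 f4 = [:f4, f3, f2:]"

end

theory Submission
  imports Defs
begin

text \<open>
  A line of \<open>X\<close> through \<open>P\<close> with direction \<open>x \<in> k\<^sup>3\<close> lies on \<open>X\<close> iff \<open>f2, f3, f4\<close> vanish at \<open>x\<close>.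
  Since \<open>char k \<noteq> 2\<close>, the tangent cone \<open>f2 = 0\<close> is a pair of lines or a smooth conic, and a
  form of degree \<open>d\<close> vanishing at more than \<open>d e\<close> points of a rational curve of degree \<open>e\<close>
  contains the curve. On a line \<open>l = 0\<close> of the cone there are at most 3 directions unless
  \<open>l | f3\<close>, and at most 4: if also \<open>l | f4\<close>, then \<open>X\<close> is singular along
  \<open>l = q2 x3\<^sup>2 + q3 x3 + q4 = 0\<close>, contradicting isolated singularities. Likewise a smooth conic
  carries at most 6 directions unless \<open>f2 | f3\<close>, and at most 8. Adding up gives the theorem.
\<close>

section \<open>Polynomials in three variables\<close>

lemma infinite_UNIV_alg_closed: "infinite (UNIV :: 'k::alg_closed_field set)"
proof
  assume fin: "finite (UNIV :: 'k set)"
  define p :: "'k poly" where "p = (\<Prod>a\<in>UNIV. [:-a, 1:]) + 1"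
  have "degree (\<Prod>a\<in>(UNIV::'k set). [:-a, 1:]) = card (UNIV::'k set)"
    by (simp add: degree_prod_eq_sum_degree fin)
  moreover have "card (UNIV::'k set) > 0" using fin by (simp add: finite_UNIV_card_ge_0)
  ultimately have "degree p > 0" unfolding p_def by (metis degree_add_eq_left degree_1)
  then obtain x where "poly p x = 0" using alg_closed_imp_poly_has_root by blast
  moreover have "poly (\<Prod>a\<in>(UNIV::'k set). [:-a, 1:]) x = 0"
    by (simp add: poly_prod fin)
  ultimately show False by (simp add: p_def)
qed

lemma poly_eq_0_if_cofinite_roots:
  fixes p :: "'k::alg_closed_field poly"
  assumes "finite A" and "\<And>x. x \<notin> A \<Longrightarrow> poly p x = 0"
  shows "p = 0"
proof (rule ccontr)
  assume "p \<noteq> 0"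
  hence "finite ({x. poly p x = 0} \<union> A)" using poly_roots_finite assms(1) by blast
  moreover have "{x. poly p x = 0} \<union> A = UNIV" using assms(2) by auto
  ultimately show False using infinite_UNIV_alg_closed by metis
qed

lemma coeff_poly_const:
  fixes p :: "'a::comm_ring_1 poly poly"
  shows "coeff (poly p [:b:]) n = poly (map_poly (\<lambda>q. coeff q n) p) b"
  by (induction p) (simp_all add: map_poly_pCons)

definition eval2 :: "'k::comm_ring_1 poly poly \<Rightarrow> 'k \<Rightarrow> 'k \<Rightarrow> 'k" where
  "eval2 p b c = poly (poly p [:b:]) c"

lemma eval3_eq_eval2: "eval3 p a b c = eval2 (poly p [:[:a:]:]) b c"
  by (simp add: eval3_def eval2_def)

lemma eval3_at_0: "eval3 p 0 b c = eval2 (coeff p 0) b c"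
  by (simp add: eval3_def eval2_def poly_0_coeff_0)

lemma eval3_linear_in_x0: "eval3 [:r0, r1:] a b c = eval2 r0 b c + a * eval2 r1 b c"
  by (simp add: eval3_def eval2_def)

lemma eval2_eq_0_imp_eq_0:
  fixes p :: "'k::alg_closed_field poly poly"
  assumes "\<And>b c. eval2 p b c = 0"
  shows "p = 0"
proof -
  have "poly p [:b:] = 0" for b
    using assms poly_eq_0_if_cofinite_roots[of "{}"] unfolding eval2_def by blast
  hence "map_poly (\<lambda>q. coeff q n) p = 0" for n
    by (intro poly_eq_0_if_cofinite_roots[of "{}"]) (simp_all flip: coeff_poly_const)
  hence "coeff (coeff p i) n = 0" for i n
    by (metis coeff_0 coeff_map_poly)
  thus ?thesis by (metis leading_coeff_0_iff)
qed

lemma eval3_eq_0_imp_eq_0: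
  fixes p :: "'k::alg_closed_field pol3"
  assumes "\<And>a b c. eval3 p a b c = 0"
  shows "p = 0"
proof -
  have "poly p [:[:a:]:] = 0" for a
    using assms eval2_eq_0_imp_eq_0 unfolding eval3_eq_eval2 by blast
  hence "map_poly (\<lambda>q. coeff q m) (map_poly (\<lambda>q. coeff q n) p) = 0" for n m
    by (intro poly_eq_0_if_cofinite_roots[of "{}"]) (simp_all flip: coeff_poly_const)
  hence "coeff (coeff (coeff p i) n) m = 0" for i n m
    by (metis coeff_0 coeff_map_poly)
  thus ?thesis by (metis leading_coeff_0_iff)
qed

lemma eval3_add [simp]: "eval3 (p + q) a b c = eval3 p a b c + eval3 q a b c"
  by (simp add: eval3_def)
lemma eval3_diff [simp]: "eval3 (p - q) a b c = eval3 p a b c - eval3 (q::'k::comm_ring_1 pol3) a b c"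
  by (simp add: eval3_def)
lemma eval3_mult [simp]: "eval3 (p * q) a b c = eval3 p a b c * eval3 q a b c"
  by (simp add: eval3_def)
lemma eval3_power [simp]: "eval3 (p ^ n) a b c = eval3 p a b c ^ n"
  by (simp add: eval3_def)
lemma eval3_0 [simp]: "eval3 0 a b c = 0"
  by (simp add: eval3_def)
lemma eval3_1 [simp]: "eval3 1 a b c = 1"
  by (simp add: eval3_def)
lemma eval3_sum [simp]: "eval3 (\<Sum>i\<in>A. f i) a b c = (\<Sum>i\<in>A. eval3 (f i) a b c)"
  by (simp add: eval3_def poly_sum)

definition C3 :: "'k::comm_ring_1 \<Rightarrow> 'k pol3" where "C3 x = [:[:[:x:]:]:]"
definition X0 :: "'k::comm_ring_1 pol3" where "X0 = [:0, 1:]"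
definition X1 :: "'k::comm_ring_1 pol3" where "X1 = [:[:0, 1:]:]"
definition X2 :: "'k::comm_ring_1 pol3" where "X2 = [:[:[:0, 1:]:]:]"

lemma eval3_C3 [simp]: "eval3 (C3 x) a b c = x" by (simp add: eval3_def C3_def)
lemma eval3_X0 [simp]: "eval3 X0 a b c = a" by (simp add: eval3_def X0_def)
lemma eval3_X1 [simp]: "eval3 X1 a b c = b" by (simp add: eval3_def X1_def)
lemma eval3_X2 [simp]: "eval3 X2 a b c = c" by (simp add: eval3_def X2_def)

definition degs_le3 :: "'k::zero pol3 \<Rightarrow> nat \<Rightarrow> bool" where
  "degs_le3 p D \<longleftrightarrow> (\<forall>i j l. mcoeff3 p i j l \<noteq> 0 \<longrightarrow> i \<le> D \<and> j \<le> D \<and> l \<le> D)"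

definition monomial_sum ::
    "('k::zero \<Rightarrow> 'r::comm_semiring_1) \<Rightarrow> 'k pol3 \<Rightarrow> nat \<Rightarrow> 'r \<Rightarrow> 'r \<Rightarrow> 'r \<Rightarrow> 'r" where
  "monomial_sum \<kappa> p D a b c =
     (\<Sum>i\<le>D. \<Sum>j\<le>D. \<Sum>l\<le>D. \<kappa> (mcoeff3 p i j l) * a ^ i * b ^ j * c ^ l)"

lemma poly_as_sum_atMost:
  fixes p :: "'a::comm_semiring_1 poly"
  assumes "degree p \<le> D"
  shows "poly p x = (\<Sum>i\<le>D. coeff p i * x ^ i)"
  unfolding poly_altdef
  by (rule sum.mono_neutral_left) (use assms in \<open>auto simp: coeff_eq_0\<close>)

lemma degs_le3_degree:
  assumes "degs_le3 p D"
  shows "degree p \<le> D" "degree (coeff p i) \<le> D" "degree (coeff (coeff p i) j) \<le> D"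
  using assms unfolding degs_le3_def mcoeff3_def
  by (auto intro!: degree_le) (metis leading_coeff_0_iff not_le)+

lemma eval3_monomial_sum:
  fixes p :: "'k::comm_ring_1 pol3"
  assumes "degs_le3 p D"
  shows "eval3 p a b c = monomial_sum id p D a b c"
proof -
  note d = degs_le3_degree[OF assms]
  have "eval3 p a b c = (\<Sum>i\<le>D. poly (poly (coeff p i) [:b:]) c * a ^ i)"
    unfolding eval3_def poly_as_sum_atMost[OF d(1)] by (simp add: poly_sum)
  also have "\<dots> = (\<Sum>i\<le>D. (\<Sum>j\<le>D. poly (coeff (coeff p i) j) c * b ^ j) * a ^ i)"
    by (subst poly_as_sum_atMost[OF d(2)]) (simp add: poly_sum)
  also have "\<dots> = (\<Sum>i\<le>D. (\<Sum>j\<le>D. (\<Sum>l\<le>D. mcoeff3 p i j l * c ^ l) * b ^ j) * a ^ i)"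
    by (subst poly_as_sum_atMost[OF d(3)]) (simp add: mcoeff3_def)
  also have "\<dots> = monomial_sum id p D a b c"
    unfolding monomial_sum_def by (simp add: sum_distrib_left sum_distrib_right mult_ac)
  finally show ?thesis .
qed

lemma degs_le3_exists: "\<exists>D. degs_le3 p D"
proof -
  define D where "D = degree p + (\<Sum>i\<le>degree p. degree (coeff p i) +
       (\<Sum>j\<le>degree (coeff p i). degree (coeff (coeff p i) j)))"
  have "i \<le> D \<and> j \<le> D \<and> l \<le> D" if nz: "mcoeff3 p i j l \<noteq> 0" for i j l
  proof -
    have l: "l \<le> degree (coeff (coeff p i) j)"
      using nz le_degree by (auto simp: mcoeff3_def)
    have j: "j \<le> degree (coeff p i)" and i: "i \<le> degree p"
      using nz by (metis coeff_0 le_degree mcoeff3_def)+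
    have "degree (coeff p i) + (\<Sum>j\<le>degree (coeff p i). degree (coeff (coeff p i) j)) \<le>
      (\<Sum>i\<le>degree p. degree (coeff p i) + (\<Sum>j\<le>degree (coeff p i). degree (coeff (coeff p i) j)))"
      using i by (intro member_le_sum) auto
    moreover have "degree (coeff (coeff p i) j) \<le> (\<Sum>j\<le>degree (coeff p i). degree (coeff (coeff p i) j))"
      using j by (intro member_le_sum) auto
    ultimately show ?thesis using i j l unfolding D_def by linarith
  qed
  thus ?thesis unfolding degs_le3_def by blast
qed

lemma poly_monomial_sum:
  "poly (monomial_sum (\<lambda>x. [:x:]) p D A B C) t = monomial_sum id p D (poly A t) (poly B t) (poly C t)"
  by (simp add: monomial_sum_def poly_sum mult.assoc)

lemma eval3_monomial_sum_C3:
  "eval3 (monomial_sum C3 p D A B C) a b c =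
     monomial_sum id p D (eval3 A a b c) (eval3 B a b c) (eval3 C a b c)"
  by (simp add: monomial_sum_def)

lemma homogeneous3_imp_degs_le3: "homogeneous3 d p \<Longrightarrow> degs_le3 p d"
  unfolding homogeneous3_def degs_le3_def by fastforce

section \<open>Vectors, matrices and linear substitutions\<close>

type_synonym 'k v3 = "'k \<times> 'k \<times> 'k"
type_synonym 'k m3 = "'k v3 \<times> 'k v3 \<times> 'k v3"

definition ev :: "'k::comm_ring_1 pol3 \<Rightarrow> 'k v3 \<Rightarrow> 'k" where
  "ev p x = (case x of (a, b, c) \<Rightarrow> eval3 p a b c)"

definition dot :: "'k::comm_ring_1 v3 \<Rightarrow> 'k v3 \<Rightarrow> 'k" where
  "dot l x = (case l of (l0, l1, l2) \<Rightarrow> case x of (x0, x1, x2) \<Rightarrow> l0 * x0 + l1 * x1 + l2 * x2)"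

definition sc :: "'k::comm_ring_1 \<Rightarrow> 'k v3 \<Rightarrow> 'k v3" where
  "sc t x = (case x of (a, b, c) \<Rightarrow> (t * a, t * b, t * c))"

definition vadd :: "'k::comm_ring_1 v3 \<Rightarrow> 'k v3 \<Rightarrow> 'k v3" where
  "vadd x y = (case x of (a, b, c) \<Rightarrow> case y of (d, e, f) \<Rightarrow> (a + d, b + e, c + f))"

text \<open>A matrix is the triple of its rows.\<close>

definition appl :: "'k::comm_ring_1 m3 \<Rightarrow> 'k v3 \<Rightarrow> 'k v3" where
  "appl M x = (case M of (r0, r1, r2) \<Rightarrow> (dot r0 x, dot r1 x, dot r2 x))"

definition lin3 :: "'k::comm_ring_1 v3 \<Rightarrow> 'k pol3" where
  "lin3 l = (case l of (l0, l1, l2) \<Rightarrow> C3 l0 * X0 + C3 l1 * X1 + C3 l2 * X2)"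

definition proportional :: "'k::comm_ring_1 v3 \<Rightarrow> 'k v3 \<Rightarrow> bool" where
  "proportional x y \<longleftrightarrow> (\<exists>t. y = sc t x)"

definition inverse3 :: "'k::comm_ring_1 m3 \<Rightarrow> 'k m3 \<Rightarrow> bool" where
  "inverse3 M N \<longleftrightarrow> (\<forall>x. appl N (appl M x) = x) \<and> (\<forall>y. appl M (appl N y) = y)"

lemma ev_simp [simp]: "ev p (a, b, c) = eval3 p a b c" by (simp add: ev_def)
lemma dot_simp [simp]: "dot (l0, l1, l2) (x0, x1, x2) = l0 * x0 + l1 * x1 + l2 * x2"
  by (simp add: dot_def)
lemma sc_simp [simp]: "sc t (a, b, c) = (t * a, t * b, t * c)" by (simp add: sc_def)
lemma vadd_simp [simp]: "vadd (a, b, c) (d, e, f) = (a + d, b + e, c + f)" by (simp add: vadd_def)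
lemma appl_simp [simp]: "appl (r0, r1, r2) x = (dot r0 x, dot r1 x, dot r2 x)" by (simp add: appl_def)

lemma v3_cases: obtains a b c where "x = (a, b, c)" by (cases x) auto
lemma m3_cases: obtains m00 m01 m02 m10 m11 m12 m20 m21 m22
  where "M = ((m00, m01, m02), (m10, m11, m12), (m20, m21, m22))"
  by (metis prod.exhaust)

lemma ev_add [simp]: "ev (p + q) x = ev p x + ev q x" by (cases x) simp
lemma ev_mult [simp]: "ev (p * q) x = ev p x * ev q x" by (cases x) simp
lemma ev_C3 [simp]: "ev (C3 c) x = c" by (cases x) simp
lemma eval3_lin3 [simp]: "eval3 (lin3 l) a b c = dot l (a, b, c)"
  by (cases l) (simp add: lin3_def)
lemma ev_lin3 [simp]: "ev (lin3 l) x = dot l x"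
  by (cases x) simp

lemma dot_vadd: "dot l (vadd x y) = dot l x + dot l y"
  by (cases l rule: v3_cases; cases x rule: v3_cases; cases y rule: v3_cases) (simp add: algebra_simps)
lemma dot_sc: "dot l (sc t x) = t * dot l x"
  by (cases l rule: v3_cases; cases x rule: v3_cases) (simp add: algebra_simps)
lemma appl_sc: "appl M (sc a y) = sc a (appl M y)"
  by (cases M rule: m3_cases; cases y rule: v3_cases) (simp add: algebra_simps)
lemma appl_zero [simp]: "appl M (0, 0, 0) = (0, 0, 0)"
  by (cases M rule: m3_cases) simp

lemma dot_0_left [simp]: "dot (0, 0, 0) x = 0"
  by (cases x rule: v3_cases) simp

lemma dot_0_right [simp]: "dot l (0, 0, 0) = 0"
  by (cases l rule: v3_cases) simp

lemma dot_vadd_left: "dot (vadd l m) x = dot l x + dot m x"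
  by (cases l rule: v3_cases; cases m rule: v3_cases; cases x rule: v3_cases) (simp add: algebra_simps)

lemma dot_sc_left: "dot (sc t l) x = t * dot l x"
  by (cases l rule: v3_cases; cases x rule: v3_cases) (simp add: algebra_simps)

lemma inverse3D:
  assumes "inverse3 M N"
  shows "appl N (appl M x) = x" "appl M (appl N y) = y"
  using assms unfolding inverse3_def by blast+

lemma inverse3_sym: "inverse3 M N \<longleftrightarrow> inverse3 N M"
  unfolding inverse3_def by blast

lemma pol3_eqI:
  fixes p q :: "'k::alg_closed_field pol3"
  assumes "\<And>x. ev p x = ev q x"
  shows "p = q"
proof -
  have "p - q = 0"
    by (rule eval3_eq_0_imp_eq_0) (use assms[of "(_, _, _)"] in simp)
  thus ?thesis by simp
qed

lemma eq_0_if_dot_eq_0: "(\<And>y. dot l y = (0::'k::comm_ring_1)) \<Longrightarrow> l = (0, 0, 0)"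
  by (cases l rule: v3_cases) (metis dot_simp mult_1_right mult_zero_right add_0 add_0_right)

lemma not_unit_if_ev_eq_0:
  fixes p :: "'k::alg_closed_field pol3"
  assumes "ev p x = 0"
  shows "\<not> is_unit p"
proof
  assume "is_unit p"
  then obtain q where "1 = p * q" by (elim dvdE)
  hence "ev (p * q) x = 1" by (metis ev_C3 C3_def one_pCons)
  thus False using assms by simp
qed

definition subst3 :: "'k::comm_ring_1 m3 \<Rightarrow> 'k pol3 \<Rightarrow> 'k pol3" where
  "subst3 M p = (case M of (r0, r1, r2) \<Rightarrow>
     monomial_sum C3 p (SOME D. degs_le3 p D) (lin3 r0) (lin3 r1) (lin3 r2))"

lemma ev_subst3: "ev (subst3 M p) x = ev p (appl M x)"
proof -
  obtain r0 r1 r2 where M: "M = (r0, r1, r2)" by (cases M) auto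
  obtain a b c where x: "x = (a, b, c)" by (cases x) auto
  have "degs_le3 p (SOME D. degs_le3 p D)" using degs_le3_exists someI_ex by metis
  thus ?thesis
    by (simp add: M x subst3_def eval3_monomial_sum_C3 eval3_monomial_sum)
qed

lemma homogeneous3_scale:
  fixes p :: "'k::comm_ring_1 pol3"
  assumes "homogeneous3 d p"
  shows "ev p (sc t x) = t ^ d * ev p x"
proof -
  obtain a b c where x: "x = (a, b, c)" by (rule v3_cases)
  have "monomial_sum id p d (t * a) (t * b) (t * c) = t ^ d * monomial_sum id p d a b c"
    unfolding monomial_sum_def sum_distrib_left
  proof (intro sum.cong refl)
    fix i j l
    show "id (mcoeff3 p i j l) * (t * a) ^ i * (t * b) ^ j * (t * c) ^ l =
          t ^ d * (id (mcoeff3 p i j l) * a ^ i * b ^ j * c ^ l)"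
    proof (cases "mcoeff3 p i j l = 0")
      case False
      hence "t ^ d = t ^ i * t ^ j * t ^ l"
        using assms by (auto simp: homogeneous3_def simp flip: power_add)
      thus ?thesis by (simp add: power_mult_distrib mult_ac)
    qed simp
  qed
  thus ?thesis
    unfolding x by (simp add: eval3_monomial_sum[OF homogeneous3_imp_degs_le3[OF assms]])
qed

lemma homogeneous3_vanishes_at_0:
  assumes "homogeneous3 d p" "d > 0"
  shows "ev p (0, 0, 0) = (0::'k::comm_ring_1)"
  using homogeneous3_scale[OF assms(1), of 0 "(0, 0, 0)"] assms(2) by (simp add: power_0_left)

definition det3 :: "'k::comm_ring_1 m3 \<Rightarrow> 'k" where
  "det3 M = (case M of ((a, b, c), (d, e, f), (g, h, i)) \<Rightarrow>
     a * (e * i - f * h) - b * (d * i - f * g) + c * (d * h - e * g))"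

lemma inverse3_if_det3_nonzero:
  fixes M :: "'k::field m3"
  assumes "det3 M \<noteq> 0"
  shows "\<exists>N. inverse3 M N"
proof -
  obtain a b c d e f g h i where M: "M = ((a, b, c), (d, e, f), (g, h, i))" by (rule m3_cases)
  obtain D where D0: "D \<noteq> 0"
    and D: "D = a * (e * i - f * h) - b * (d * i - f * g) + c * (d * h - e * g)"
    using assms by (simp add: M det3_def)
  define N where "N = (((e * i - f * h) / D, (c * h - b * i) / D, (b * f - c * e) / D),
    ((f * g - d * i) / D, (a * i - c * g) / D, (c * d - a * f) / D),
    ((d * h - e * g) / D, (b * g - a * h) / D, (a * e - b * d) / D))"
  have "appl N (appl M (x0, x1, x2)) = (x0, x1, x2)" for x0 x1 x2
    by (simp add: M N_def field_simps D0) (use D in algebra)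
  moreover have "appl M (appl N (x0, x1, x2)) = (x0, x1, x2)" for x0 x1 x2
    by (simp add: M N_def field_simps D0) (use D in algebra)
  ultimately show ?thesis unfolding inverse3_def by (metis v3_cases)
qed

section \<open>Binary forms and rational curves\<close>

definition binary_form :: "nat \<Rightarrow> 'a::comm_semiring_1 poly \<Rightarrow> 'a \<Rightarrow> 'a \<Rightarrow> 'a" where
  "binary_form n P s t = (\<Sum>i\<le>n. coeff P i * s ^ (n - i) * t ^ i)"

lemma binary_form_scale:
  "binary_form n P (c * s) (c * t) = c ^ n * binary_form n P s t"
  unfolding binary_form_def sum_distrib_left
proof (intro sum.cong refl)
  fix i assume "i \<in> {..n}"
  hence "c ^ n = c ^ (n - i) * c ^ i" by (simp flip: power_add)
  thus "coeff P i * (c * s) ^ (n - i) * (c * t) ^ i = c ^ n * (coeff P i * s ^ (n - i) * t ^ i)"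
    by (simp add: power_mult_distrib mult_ac)
qed

lemma binary_form_dehomogenize:
  fixes P :: "'a::field poly"
  assumes "degree P \<le> n" "s \<noteq> 0"
  shows "binary_form n P s t = s ^ n * poly P (t / s)"
  unfolding binary_form_def poly_as_sum_atMost[OF assms(1)] sum_distrib_left
proof (intro sum.cong refl)
  fix i assume "i \<in> {..n}"
  hence "s ^ n = s ^ (n - i) * s ^ i" by (simp flip: power_add)
  thus "coeff P i * s ^ (n - i) * t ^ i = s ^ n * (coeff P i * (t / s) ^ i)"
    using assms(2) by (simp add: power_divide)
qed

lemma binary_form_at_0: "binary_form n P 0 t = coeff P n * t ^ n"
  unfolding binary_form_def by (subst sum.remove[of _ n]) (auto intro!: sum.neutral simp: power_0_left)

lemma proportional_pairs:
  fixes s t s' t' :: "'a::field"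
  assumes "(s, t) \<noteq> (0, 0)" "s * t' = s' * t"
  shows "\<exists>c. s' = c * s \<and> t' = c * t"
proof (cases "s = 0")
  case True
  thus ?thesis using assms by (intro exI[of _ "t' / t"]) auto
next
  case False
  thus ?thesis using assms(2) by (intro exI[of _ "s' / s"]) (auto simp: field_simps)
qed

text \<open>Pairs \<open>(s, t)\<close> with \<open>s \<noteq> 0\<close> give distinct roots \<open>t / s\<close> of \<open>P\<close>; at most one pair has
  \<open>s = 0\<close>, and it forces \<open>degree P < n\<close>.\<close>

lemma binary_form_eq_0_if_many_zeros:
  fixes P :: "'a::field poly" and S :: "('a \<times> 'a) set"
  assumes deg: "degree P \<le> n" and fin: "finite S" and card: "card S > n"
    and nz: "\<And>p. p \<in> S \<Longrightarrow> p \<noteq> (0, 0)"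
    and zero: "\<And>s t. (s, t) \<in> S \<Longrightarrow> binary_form n P s t = 0"
    and np: "\<And>s t s' t'. (s, t) \<in> S \<Longrightarrow> (s', t') \<in> S \<Longrightarrow> (s, t) \<noteq> (s', t') \<Longrightarrow> s * t' \<noteq> s' * t"
  shows "P = 0"
proof (rule ccontr)
  assume P: "P \<noteq> 0"
  define S1 where "S1 = {p \<in> S. fst p \<noteq> 0}"
  define S0 where "S0 = {p \<in> S. fst p = 0}"
  have "inj_on (\<lambda>p. snd p / fst p) S1"
    by (rule inj_onI) (use np in \<open>force simp: S1_def field_simps\<close>)
  moreover have "(\<lambda>p. snd p / fst p) ` S1 \<subseteq> {x. poly P x = 0}"
    using zero binary_form_dehomogenize[OF deg] by (force simp: S1_def)
  ultimately have "card S1 \<le> card {x. poly P x = 0}"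
    using poly_roots_finite[OF P] by (metis card_image card_mono)
  also have "\<dots> \<le> degree P" using P by (rule card_poly_roots_bound)
  finally have c1: "card S1 \<le> degree P" .
  have c0: "card S0 \<le> 1"
    using np fin by (force simp: S0_def card_le_Suc0_iff_eq)
  have "S0 \<noteq> {} \<Longrightarrow> coeff P n = 0"
    using zero nz by (force simp: S0_def binary_form_at_0)
  hence "S0 \<noteq> {} \<Longrightarrow> degree P < n" using deg P le_antisym by fastforce
  moreover have "card S = card S1 + card S0"
    unfolding S1_def S0_def using fin by (subst card_Un_disjoint[symmetric]) (auto intro: arg_cong[where f = card])
  ultimately show False using c1 c0 card deg by (cases "S0 = {}") auto
qed

lemma coeff_mult_at_degree_bounds:
  fixes p q :: "'a::comm_semiring_1 poly"
  assumes "degree p \<le> a" "degree q \<le> b"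
  shows "coeff (p * q) (a + b) = coeff p a * coeff q b"
proof -
  have "coeff (p * q) (a + b) = (\<Sum>i\<in>{a}. coeff p i * coeff q (a + b - i))"
    unfolding coeff_mult
  proof (rule sum.mono_neutral_right)
    show "\<forall>i\<in>{..a + b} - {a}. coeff p i * coeff q (a + b - i) = 0"
    proof
      fix i assume i: "i \<in> {..a + b} - {a}"
      show "coeff p i * coeff q (a + b - i) = 0"
      proof (cases "i < a")
        case True
        hence "degree q < a + b - i" using assms by linarith
        thus ?thesis by (simp add: coeff_eq_0)
      next
        case False
        hence "degree p < i" using assms i by auto
        thus ?thesis by (simp add: coeff_eq_0)
      qed
    qed
  qed auto
  thus ?thesis by simp
qed

lemma coeff_power_at_degree_bound:
  fixes p :: "'a::comm_semiring_1 poly"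
  assumes "degree p \<le> e"
  shows "degree (p ^ i) \<le> e * i" "coeff (p ^ i) (e * i) = coeff p e ^ i"
proof -
  show deg: "degree (p ^ i) \<le> e * i" for i
    by (meson assms degree_power_le le_trans mult_le_mono1)
  show "coeff (p ^ i) (e * i) = coeff p e ^ i"
    by (induction i) (simp_all add: coeff_mult_at_degree_bounds[OF assms deg, simplified])
qed

lemma top_coeff_of_monomial:
  fixes A B C :: "'a::comm_semiring_1 poly"
  assumes "degree A \<le> e" "degree B \<le> e" "degree C \<le> e"
  shows "degree (A ^ i * B ^ j * C ^ l) \<le> e * (i + j + l)"
    and "coeff (A ^ i * B ^ j * C ^ l) (e * (i + j + l)) = coeff A e ^ i * coeff B e ^ j * coeff C e ^ l"
proof -
  note bounds = coeff_power_at_degree_bound[OF assms(1)] coeff_power_at_degree_bound[OF assms(2)]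
    coeff_power_at_degree_bound[OF assms(3)]
  have AB: "degree (A ^ i * B ^ j) \<le> e * i + e * j"
    using bounds degree_mult_le[of "A ^ i" "B ^ j"] by (meson add_mono le_trans)
  show "degree (A ^ i * B ^ j * C ^ l) \<le> e * (i + j + l)"
    using AB bounds degree_mult_le[of "A ^ i * B ^ j" "C ^ l"]
    by (simp add: add_mult_distrib2) (meson add_mono le_trans)
  show "coeff (A ^ i * B ^ j * C ^ l) (e * (i + j + l)) = coeff A e ^ i * coeff B e ^ j * coeff C e ^ l"
    using coeff_mult_at_degree_bounds[OF AB bounds(5)] coeff_mult_at_degree_bounds[OF bounds(1,3)]
    by (simp add: add_mult_distrib2 bounds)
qed

definition curve_point ::
    "nat \<Rightarrow> 'a::comm_ring_1 poly \<Rightarrow> 'a poly \<Rightarrow> 'a poly \<Rightarrow> 'a \<Rightarrow> 'a \<Rightarrow> 'a v3" where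
  "curve_point e A B C s t = (binary_form e A s t, binary_form e B s t, binary_form e C s t)"

lemma curve_point_scale:
  "curve_point e A B C (c * s) (c * t) = sc (c ^ e) (curve_point e A B C s t)"
  by (simp add: curve_point_def binary_form_scale)

lemma ev_curve_point_eq_binary_form:
  fixes g :: "'k::field pol3"
  assumes h: "homogeneous3 d g" and deg: "degree A \<le> e" "degree B \<le> e" "degree C \<le> e"
  obtains Q where "degree Q \<le> d * e"
    and "\<And>s t. ev g (curve_point e A B C s t) = binary_form (d * e) Q s t"
proof
  define Q where "Q = monomial_sum (\<lambda>x. [:x:]) g d A B C"
  note expand = eval3_monomial_sum[OF homogeneous3_imp_degs_le3[OF h]]
  have monomial: "degree ([:mcoeff3 g i j l:] * A ^ i * B ^ j * C ^ l) \<le> d * e \<and>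
     coeff ([:mcoeff3 g i j l:] * A ^ i * B ^ j * C ^ l) (d * e) =
       mcoeff3 g i j l * coeff A e ^ i * coeff B e ^ j * coeff C e ^ l" for i j l
  proof (cases "mcoeff3 g i j l = 0")
    case False
    hence de: "d * e = e * (i + j + l)" using h by (auto simp: homogeneous3_def)
    show ?thesis unfolding de using top_coeff_of_monomial[OF deg, of i j l]
        degree_smult_le[of "mcoeff3 g i j l" "A ^ i * B ^ j * C ^ l"]
      by (simp add: mult.assoc)
  qed simp
  show "degree Q \<le> d * e"
    unfolding Q_def monomial_sum_def by (intro degree_sum_le) (use monomial in auto)
  have top: "coeff Q (d * e) = eval3 g (coeff A e) (coeff B e) (coeff C e)"
    unfolding Q_def monomial_sum_def expand coeff_sum
    by (intro sum.cong refl) (simp only: monomial[THEN conjunct2] id_def)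
  fix s t
  show "ev g (curve_point e A B C s t) = binary_form (d * e) Q s t"
  proof (cases "s = 0")
    case True
    have "curve_point e A B C s t = sc (t ^ e) (coeff A e, coeff B e, coeff C e)"
      by (simp add: True curve_point_def binary_form_at_0 mult.commute)
    hence "ev g (curve_point e A B C s t) = (t ^ e) ^ d * coeff Q (d * e)"
      by (simp only: homogeneous3_scale[OF h] top ev_simp)
    thus ?thesis by (simp add: True binary_form_at_0 mult.commute flip: power_mult)
  next
    case False
    have "curve_point e A B C s t = sc (s ^ e) (poly A (t / s), poly B (t / s), poly C (t / s))"
      using False by (simp add: curve_point_def binary_form_dehomogenize deg)
    hence "ev g (curve_point e A B C s t) = (s ^ e) ^ d * poly Q (t / s)"
      by (simp only: homogeneous3_scale[OF h] ev_simp Q_def poly_monomial_sum expand)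
    thus ?thesis
      using binary_form_dehomogenize[OF \<open>degree Q \<le> d * e\<close> False]
      by (simp add: mult.commute flip: power_mult)
  qed
qed

lemma vanishes_on_curve_if_many_zeros:
  fixes g :: "'k::field pol3" and T :: "'k v3 set"
  assumes h: "homogeneous3 d g" and deg: "degree A \<le> e" "degree B \<le> e" "degree C \<le> e"
    and fin: "finite T" and card: "card T > d * e"
    and np: "pairwise (\<lambda>x y. \<not> proportional x y) T"
    and zeros: "\<And>x. x \<in> T \<Longrightarrow> ev g x = 0"
    and on_curve: "\<And>x. x \<in> T \<Longrightarrow> \<exists>st. st \<noteq> (0, 0) \<and> x = curve_point e A B C (fst st) (snd st)"
  shows "ev g (curve_point e A B C s t) = 0"
proof -
  obtain Q where degQ: "degree Q \<le> d * e"
    and Q: "\<And>s t. ev g (curve_point e A B C s t) = binary_form (d * e) Q s t"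
    using ev_curve_point_eq_binary_form[OF h deg] by blast
  define par where "par x = (SOME st. st \<noteq> (0, 0) \<and> x = curve_point e A B C (fst st) (snd st))" for x
  have par: "par x \<noteq> (0, 0) \<and> x = curve_point e A B C (fst (par x)) (snd (par x))" if "x \<in> T" for x
    unfolding par_def using someI_ex[OF on_curve[OF that]] .
  have inj: "inj_on par T" by (rule inj_onI) (metis par)
  have "Q = 0"
  proof (rule binary_form_eq_0_if_many_zeros[OF degQ])
    show "finite (par ` T)" "card (par ` T) > d * e" using fin card inj by (simp_all add: card_image)
    show "p \<noteq> (0, 0)" if "p \<in> par ` T" for p using that par by force
    show "binary_form (d * e) Q s t = 0" if "(s, t) \<in> par ` T" for s t
      using that par zeros Q by (metis fst_conv image_iff snd_conv)
    fix s t s' t' assume st: "(s, t) \<in> par ` T" and st': "(s', t') \<in> par ` T"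
      and ne: "(s, t) \<noteq> (s', t')"
    obtain x where x: "x \<in> T" "par x = (s, t)" using st by auto
    obtain y where y: "y \<in> T" "par y = (s', t')" using st' by auto
    show "s * t' \<noteq> s' * t"
    proof
      assume "s * t' = s' * t"
      then obtain c where "s' = c * s" "t' = c * t"
        using proportional_pairs par[OF x(1)] x(2) by (metis)
      hence "y = sc (c ^ e) x" using par x y by (metis curve_point_scale fst_conv snd_conv)
      thus False using np x y ne unfolding pairwise_def proportional_def by fastforce
    qed
  qed
  thus ?thesis by (simp add: Q binary_form_def)
qed

section \<open>Forms vanishing on a line or a conic\<close>

lemma linear_form_as_coordinate:
  fixes l :: "'k::field v3"
  assumes "l \<noteq> (0, 0, 0)"
  obtains N M where "inverse3 N M" and "\<And>x. fst (appl N x) = dot l x"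
proof -
  obtain \<alpha> \<beta> \<gamma> where l: "l = (\<alpha>, \<beta>, \<gamma>)" by (rule v3_cases)
  consider "\<alpha> \<noteq> 0" | "\<beta> \<noteq> 0" | "\<gamma> \<noteq> 0" using assms l by auto
  then obtain N :: "'k m3" where "det3 N \<noteq> 0" "\<And>x. fst (appl N x) = dot l x"
  proof cases
    case 1
    thus ?thesis using that[of "(l, (0, 1, 0), (0, 0, 1))"] by (simp add: det3_def l)
  next
    case 2
    thus ?thesis using that[of "(l, (1, 0, 0), (0, 0, 1))"] by (simp add: det3_def l)
  next
    case 3
    thus ?thesis using that[of "(l, (1, 0, 0), (0, 1, 0))"] by (simp add: det3_def l)
  qed
  moreover from this obtain M where "inverse3 N M" using inverse3_if_det3_nonzero by blast
  ultimately show ?thesis using that by blast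
qed

lemma binary_form_1: "binary_form 1 [:a, b:] s t = a * s + b * t"
  by (simp add: binary_form_def)

lemma binary_form_2: "binary_form 2 [:a, b, c:] s t = a * s ^ 2 + b * (s * t) + c * t ^ 2"
  by (simp add: binary_form_def numeral_2_eq_2 power2_eq_square mult.assoc)

lemma appl_as_line_point:
  "appl ((m00, m01, m02), (m10, m11, m12), (m20, m21, m22)) (0, s, t) =
     curve_point 1 [:m01, m02:] [:m11, m12:] [:m21, m22:] s t"
  by (simp only: appl_simp dot_simp curve_point_def binary_form_1) (simp add: mult.commute)

lemma appl_as_conic_point:
  "appl ((m00, m01, m02), (m10, m11, m12), (m20, m21, m22)) (s * t, s ^ 2, t ^ 2) =
     curve_point 2 [:m01, m00, m02:] [:m11, m10, m12:] [:m21, m20, m22:] s t"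
  by (simp only: appl_simp dot_simp curve_point_def binary_form_2) (simp add: ac_simps)

lemma vanishes_on_line_if_many_zeros:
  fixes g :: "'k::field pol3" and l :: "'k v3" and T :: "'k v3 set"
  assumes l: "l \<noteq> (0, 0, 0)" and h: "homogeneous3 d g" and fin: "finite T" and card: "card T > d"
    and np: "pairwise (\<lambda>x y. \<not> proportional x y) T"
    and T: "\<And>x. x \<in> T \<Longrightarrow> x \<noteq> (0, 0, 0) \<and> dot l x = 0 \<and> ev g x = 0"
    and x: "dot l x = 0"
  shows "ev g x = 0"
proof -
  obtain N M where NM: "inverse3 N M" and Nl: "\<And>x. fst (appl N x) = dot l x"
    using linear_form_as_coordinate[OF l] by blast
  obtain m00 m01 m02 m10 m11 m12 m20 m21 m22
    where M: "M = ((m00, m01, m02), (m10, m11, m12), (m20, m21, m22))" by (rule m3_cases)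
  let ?line = "curve_point 1 [:m01, m02:] [:m11, m12:] [:m21, m22:]"
  have on_line: "\<exists>st. (x \<noteq> (0, 0, 0) \<longrightarrow> st \<noteq> (0, 0)) \<and> x = ?line (fst st) (snd st)"
    if lx: "dot l x = 0" for x
  proof -
    obtain s t where "appl N x = (0, s, t)"
      using Nl[of x] lx by (cases "appl N x" rule: v3_cases) auto
    hence "x = appl M (0, s, t)" using inverse3D(1)[OF NM, of x] by simp
    moreover from this have "x \<noteq> (0, 0, 0) \<longrightarrow> (s, t) \<noteq> (0, 0)" by auto
    ultimately show ?thesis unfolding M appl_as_line_point by (intro exI[of _ "(s, t)"]) simp
  qed
  obtain st where "x = ?line (fst st) (snd st)" using on_line[OF x] by blast
  moreover have "ev g (?line s t) = 0" for s t
  proof (rule vanishes_on_curve_if_many_zeros[OF h _ _ _ fin _ np])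
    show "card T > d * 1" using card by simp
    show "ev g y = 0" if "y \<in> T" for y using T[OF that] by blast
    show "\<exists>st. st \<noteq> (0, 0) \<and> y = ?line (fst st) (snd st)" if "y \<in> T" for y
      using on_line T[OF that] by blast
  qed simp_all
  ultimately show ?thesis by simp
qed

lemma conic_point_exists:
  fixes y0 y1 y2 :: "'k::alg_closed_field"
  assumes "y0 ^ 2 = y1 * y2"
  obtains s t where "(y0, y1, y2) = (s * t, s ^ 2, t ^ 2)"
proof -
  obtain s where s: "s ^ 2 = y1" using nth_root_exists[of 2 y1] by auto
  obtain t' where t': "t' ^ 2 = y2" using nth_root_exists[of 2 y2] by auto
  show ?thesis
  proof (cases "s = 0")
    case True
    thus ?thesis using that[of s t'] assms s t' by simp
  next
    case False
    have "(y0 / s) ^ 2 = y1 * y2 / y1" using assms s by (simp add: power_divide)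
    moreover have "y1 \<noteq> 0" using s False by auto
    ultimately have "(y0 / s) ^ 2 = y2" by simp
    thus ?thesis using that[of s "y0 / s"] s False by simp
  qed
qed

lemma vanishes_on_conic_if_many_zeros:
  fixes f g :: "'k::alg_closed_field pol3" and M N :: "'k m3" and T :: "'k v3 set"
  assumes MN: "inverse3 M N" and k: "k \<noteq> 0"
    and f: "\<And>y0 y1 y2. ev f (appl M (y0, y1, y2)) = k * (y0 ^ 2 - y1 * y2)"
    and h: "homogeneous3 d g" and fin: "finite T" and card: "card T > d * 2"
    and np: "pairwise (\<lambda>x y. \<not> proportional x y) T"
    and T: "\<And>x. x \<in> T \<Longrightarrow> x \<noteq> (0, 0, 0) \<and> ev f x = 0 \<and> ev g x = 0"
    and x: "ev f x = 0"
  shows "ev g x = 0"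
proof -
  obtain m00 m01 m02 m10 m11 m12 m20 m21 m22
    where M: "M = ((m00, m01, m02), (m10, m11, m12), (m20, m21, m22))" by (rule m3_cases)
  let ?conic = "curve_point 2 [:m01, m00, m02:] [:m11, m10, m12:] [:m21, m20, m22:]"
  have on_conic: "\<exists>st. (x \<noteq> (0, 0, 0) \<longrightarrow> st \<noteq> (0, 0)) \<and> x = ?conic (fst st) (snd st)"
    if fx: "ev f x = 0" for x
  proof -
    obtain y0 y1 y2 where y: "appl N x = (y0, y1, y2)" by (rule v3_cases)
    hence x: "x = appl M (y0, y1, y2)" using inverse3D(2)[OF MN, of x] by simp
    hence "y0 ^ 2 = y1 * y2" using fx f k by simp
    then obtain s t where "(y0, y1, y2) = (s * t, s ^ 2, t ^ 2)" by (rule conic_point_exists)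
    hence "x = appl M (s * t, s ^ 2, t ^ 2)" using x by simp
    moreover from this have "x \<noteq> (0, 0, 0) \<longrightarrow> (s, t) \<noteq> (0, 0)" by auto
    ultimately show ?thesis unfolding M appl_as_conic_point by (intro exI[of _ "(s, t)"]) simp
  qed
  obtain st where "x = ?conic (fst st) (snd st)" using on_conic[OF x] by blast
  moreover have "ev g (?conic s t) = 0" for s t
  proof (rule vanishes_on_curve_if_many_zeros[OF h _ _ _ fin _ np])
    show "card T > d * 2" using card by simp
    show "ev g y = 0" if "y \<in> T" for y using T[OF that] by blast
    show "\<exists>st. st \<noteq> (0, 0) \<and> y = ?conic (fst st) (snd st)" if "y \<in> T" for y
      using on_conic T[OF that] by blast
  qed simp_all
  ultimately show ?thesis by simp
qed

lemma lin3_dvd_if_vanishes_on_line: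
  fixes g :: "'k::alg_closed_field pol3"
  assumes l: "l \<noteq> (0, 0, 0)" and van: "\<And>x. dot l x = 0 \<Longrightarrow> ev g x = 0"
  shows "lin3 l dvd g"
proof -
  obtain N M where NM: "inverse3 N M" and Nl: "\<And>x. fst (appl N x) = dot l x"
    using linear_form_as_coordinate[OF l] by blast
  define g' where "g' = subst3 M g"
  have "coeff g' 0 = 0"
  proof (rule eval2_eq_0_imp_eq_0)
    fix b c
    have "dot l (appl M (0, b, c)) = 0" using Nl[of "appl M (0, b, c)"] inverse3D(2)[OF NM] by simp
    hence "ev g' (0, b, c) = 0" unfolding g'_def ev_subst3 by (rule van)
    thus "eval2 (coeff g' 0) b c = 0" by (simp add: eval3_at_0)
  qed
  hence "X0 dvd g'" using poly_eq_0_iff_dvd[of g' 0] by (simp add: X0_def poly_0_coeff_0)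
  then obtain q where q: "g' = X0 * q" by (elim dvdE)
  have "g = lin3 l * subst3 N q"
  proof (rule pol3_eqI)
    fix x
    have "ev g x = ev g' (appl N x)" by (simp add: g'_def ev_subst3 inverse3D(1)[OF NM])
    also have "\<dots> = fst (appl N x) * ev q (appl N x)"
      unfolding q by (cases "appl N x" rule: v3_cases) simp
    finally show "ev g x = ev (lin3 l * subst3 N q) x" by (simp add: Nl ev_subst3)
  qed
  thus ?thesis by simp
qed

definition normal_conic :: "'k::comm_ring_1 pol3" where
  "normal_conic = [:- ([:0, 1:] * [:[:0, 1:]:]), 0, 1:]"

lemma eval3_normal_conic [simp]: "eval3 normal_conic a b c = a ^ 2 - b * c"
  by (simp add: normal_conic_def eval3_def power2_eq_square)

text \<open>Substituting \<open>-s\<close> for \<open>s\<close> separates the two coefficients.\<close>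

lemma linear_in_x0_eq_0_if_vanishes_on_conic:
  fixes r0 r1 :: "'k::alg_closed_field poly poly"
  assumes two: "(2::'k) \<noteq> 0" and van: "\<And>s t. eval3 [:r0, r1:] (s * t) (s ^ 2) (t ^ 2) = 0"
  shows "r0 = 0" "r1 = 0"
proof -
  have E: "eval2 r0 (s ^ 2) (t ^ 2) + s * t * eval2 r1 (s ^ 2) (t ^ 2) = 0" for s t
    using van[of s t] by (simp add: eval3_linear_in_x0)
  have E0: "eval2 r0 (s ^ 2) (t ^ 2) = 0" for s t
  proof -
    have "2 * eval2 r0 (s ^ 2) (t ^ 2) = 0"
      using E[of s t] E[of "-s" t] by (simp add: algebra_simps)
    thus ?thesis using two by simp
  qed
  have roots: "\<exists>s. s ^ 2 = u" for u :: 'k using nth_root_exists[of 2 u] by auto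
  show "r0 = 0"
    by (rule eval2_eq_0_imp_eq_0) (metis E0 roots)
  have "X1 * X2 * [:r1:] = (0::'k pol3)"
  proof (rule eval3_eq_0_imp_eq_0)
    fix a u v :: 'k
    obtain s t where "s ^ 2 = u" "t ^ 2 = v" using roots by metis
    moreover have "s * t * eval2 r1 (s ^ 2) (t ^ 2) = 0" using E E0 by (metis add_0)
    ultimately show "eval3 (X1 * X2 * [:r1:]) a u v = 0"
      by (auto simp: eval3_def eval2_def X1_def X2_def power2_eq_square)
  qed
  thus "r1 = 0" by (simp add: X1_def X2_def)
qed

lemma dvd_if_vanishes_on_conic:
  fixes f g :: "'k::alg_closed_field pol3"
  assumes two: "(2::'k) \<noteq> 0" and MN: "inverse3 M N" and k: "k \<noteq> 0"
    and f: "\<And>y0 y1 y2. ev f (appl M (y0, y1, y2)) = k * (y0 ^ 2 - y1 * y2)"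
    and van: "\<And>x. ev f x = 0 \<Longrightarrow> ev g x = 0"
  shows "f dvd g"
proof -
  define g' where "g' = subst3 M g"
  have g'0: "eval3 g' (s * t) (s ^ 2) (t ^ 2) = 0" for s t
    using van[of "appl M (s * t, s ^ 2, t ^ 2)"] f
    by (simp add: g'_def ev_subst3[symmetric] power_mult_distrib)
  obtain q r where qr: "pseudo_divmod g' normal_conic = (q, r)" by fastforce
  have deg: "degree (normal_conic :: 'k pol3) = 2" and lc: "coeff (normal_conic :: 'k pol3) 2 = 1"
    by (simp_all add: normal_conic_def numeral_2_eq_2)
  have "g' = normal_conic * q + r" and "r = 0 \<or> degree r < 2"
    using pseudo_divmod[OF _ qr] deg lc by (auto simp: normal_conic_def)
  hence r: "r = [:coeff r 0, coeff r 1:]" and g': "g' = normal_conic * q + r"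
    by (auto intro!: poly_eqI simp: coeff_pCons coeff_eq_0 split: nat.splits)
  have "eval3 [:coeff r 0, coeff r 1:] (s * t) (s ^ 2) (t ^ 2) = 0" for s t
    using g'0[of s t] r unfolding g' by (simp add: power_mult_distrib)
  hence "r = 0" using r linear_in_x0_eq_0_if_vanishes_on_conic[OF two] by (metis pCons_0_0)
  have "g = f * (C3 (1 / k) * subst3 N q)"
  proof (rule pol3_eqI)
    fix x
    obtain y0 y1 y2 where y: "appl N x = (y0, y1, y2)" by (rule v3_cases)
    have x: "x = appl M (y0, y1, y2)" using inverse3D(2)[OF MN, of x] y by simp
    have "ev g x = ev g' (y0, y1, y2)" unfolding g'_def ev_subst3 x ..
    also have "\<dots> = (y0 ^ 2 - y1 * y2) * ev q (y0, y1, y2)" using g' \<open>r = 0\<close> by simp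
    also have "\<dots> = ev (f * (C3 (1 / k) * subst3 N q)) x" using f k y by (simp add: x ev_subst3)
    finally show "ev g x = ev (f * (C3 (1 / k) * subst3 N q)) x" .
  qed
  thus ?thesis by (rule dvdI)
qed

section \<open>Curves of singular points\<close>

lemma map_poly_derivation:
  fixes D :: "'a::comm_ring_1 \<Rightarrow> 'a"
  assumes add: "\<And>a b. D (a + b) = D a + D b" and mult: "\<And>a b. D (a * b) = D a * b + a * D b"
  shows "\<And>p q. map_poly D (p + q) = map_poly D p + map_poly D q"
    and "\<And>p q. map_poly D (p * q) = map_poly D p * q + p * map_poly D q"
proof -
  have D0: "D 0 = 0" using add[of 0 0] by simp
  show add': "map_poly D (p + q) = map_poly D p + map_poly D q" for p q
    by (intro poly_eqI) (simp add: coeff_map_poly D0 add)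
  have smult: "map_poly D (smult a q) = smult (D a) q + smult a (map_poly D q)" for a q
    by (intro poly_eqI) (simp add: coeff_map_poly D0 mult)
  show "map_poly D (p * q) = map_poly D p * q + p * map_poly D q" for p q
  proof (induction p)
    case (pCons a p)
    have "map_poly D (pCons a p * q) = smult (D a) q + smult a (map_poly D q) + pCons 0 (map_poly D (p * q))"
      by (simp add: add' smult map_poly_pCons D0)
    also have "\<dots> = map_poly D (pCons a p) * q + pCons a p * map_poly D q"
      by (simp add: pCons.IH map_poly_pCons D0 algebra_simps)
    finally show ?case .
  qed simp
qed

lemma pderiv_leibniz: "pderiv ((a::'a::idom poly) * b) = pderiv a * b + a * pderiv b"
  by (simp add: pderiv_mult algebra_simps)

lemmas map_pderiv = map_poly_derivation[OF pderiv_add pderiv_leibniz]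
lemmas map2_pderiv = map_poly_derivation[OF map_pderiv]
lemmas map3_pderiv = map_poly_derivation[OF map2_pderiv]

lemma pdiff_mult: "pdiff i (A * B) = pdiff i A * B + A * pdiff i (B :: 'k::idom pol4)"
  unfolding pdiff_def by (simp add: map_pderiv(2) map2_pderiv(2) map3_pderiv(2) pderiv_leibniz)

lemma eval4_simp [simp]: "eval4 F (x0, x1, x2, x3) = eval3 (poly F (C3 x3)) x0 x1 x2"
  by (simp add: eval4_def C3_def)

lemma eval4_add: "eval4 (A + B) w = eval4 A w + eval4 B w"
  by (cases w) (simp add: eval4_def)

lemma eval4_mult: "eval4 (A * B) w = eval4 A w * eval4 B w"
  by (cases w) (simp add: eval4_def)

lemma eval4_quartic:
  "eval4 (quartic f2 f3 f4) (x0, x1, x2, x3::'k::comm_ring_1) =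
     x3 ^ 2 * eval3 f2 x0 x1 x2 + x3 * eval3 f3 x0 x1 x2 + eval3 f4 x0 x1 x2"
  by (simp add: quartic_def algebra_simps power2_eq_square)

lemma smul_simp [simp]: "smul c (a, b, d, e) = (c * a, c * b, c * d, c * e)"
  by (simp add: smul_def)

lemma sing_vecs_mult:
  fixes A B :: "'k::idom pol4"
  assumes "w \<noteq> (0, 0, 0, 0)" "eval4 A w = 0" "eval4 B w = 0"
  shows "w \<in> sing_vecs (A * B)"
  using assms unfolding sing_vecs_def by (simp add: pdiff_mult eval4_add eval4_mult)

lemma not_finite_sing_if_infinite_family:
  fixes F :: "'k::field pol4" and \<psi> :: "'a \<Rightarrow> 'k pt"
  assumes inf: "infinite U" and sing: "\<And>u. u \<in> U \<Longrightarrow> \<psi> u \<in> sing_vecs F"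
    and inj: "\<And>u v c. u \<in> U \<Longrightarrow> v \<in> U \<Longrightarrow> \<psi> v = smul c (\<psi> u) \<Longrightarrow> u = v"
  shows "\<not> finite_sing F"
proof
  assume "finite_sing F"
  then obtain S where S: "finite S" and cov: "\<And>w. w \<in> sing_vecs F \<Longrightarrow> \<exists>s\<in>S. \<exists>c. w = smul c s"
    unfolding finite_sing_def by blast
  define rep where "rep u = (SOME s. s \<in> S \<and> (\<exists>c. \<psi> u = smul c s))" for u
  have rep: "rep u \<in> S \<and> (\<exists>c. \<psi> u = smul c (rep u))" if "u \<in> U" for u
    unfolding rep_def by (rule someI_ex) (use cov[OF sing[OF that]] in blast)
  have "inj_on rep U"
  proof (rule inj_onI)
    fix u v assume u: "u \<in> U" and v: "v \<in> U" and e: "rep u = rep v"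
    obtain c where c: "\<psi> u = smul c (rep u)" using rep[OF u] by blast
    obtain c' where c': "\<psi> v = smul c' (rep u)" using rep[OF v] e by auto
    have "\<psi> u \<noteq> (0, 0, 0, 0)" using sing[OF u] by (simp add: sing_vecs_def)
    hence "c \<noteq> 0" using c by (cases "rep u") auto
    hence "\<psi> v = smul (c' / c) (\<psi> u)" using c c' by (cases "rep u") simp
    thus "u = v" using inj[OF u v] by blast
  qed
  hence "infinite (rep ` U)" using inf finite_imageD by blast
  moreover have "rep ` U \<subseteq> S" using rep by blast
  ultimately show False using S finite_subset by blast
qed

definition point4 :: "'k v3 \<Rightarrow> 'k \<Rightarrow> 'k pt" where
  "point4 x z = (fst x, fst (snd x), snd (snd x), z)"

lemma eval4_point4: "eval4 F (point4 x z) = ev (poly F (C3 z)) x"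
  by (cases x rule: v3_cases) (simp add: point4_def)

lemma point4_eq_0_iff: "point4 x z = (0, 0, 0, 0) \<longleftrightarrow> x = (0, 0, 0) \<and> z = 0"
  by (cases x rule: v3_cases) (auto simp: point4_def)

lemma point4_eq_smul_iff: "point4 x' z' = smul c (point4 x z) \<longleftrightarrow> x' = sc c x \<and> z' = c * z"
  by (cases x rule: v3_cases; cases x' rule: v3_cases) (auto simp: point4_def)

lemma quadratic_has_root:
  fixes A B C :: "'k::alg_closed_field"
  assumes "A \<noteq> 0 \<or> B \<noteq> 0"
  shows "\<exists>z. z ^ 2 * A + z * B + C = 0"
proof (cases "A = 0")
  case True
  thus ?thesis using assms by (intro exI[of _ "- C / B"]) simp
next
  case False
  hence "degree [:C, B, A:] > 0" by simp
  then obtain z where "poly [:C, B, A:] z = 0" using alg_closed_imp_poly_has_root by blast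
  thus ?thesis by (intro exI[of _ z]) (simp add: algebra_simps power2_eq_square)
qed

text \<open>\<open>[:A:] * [:q4, q3, q2:]\<close> is singular wherever both factors vanish, e.g. at \<open>(x, z)\<close> with
  \<open>A x = 0\<close> and \<open>z\<close> a root of \<open>q2 x z\<^sup>2 + q3 x z + q4 x\<close>.\<close>

lemma not_finite_sing_if_family_on_component:
  fixes A q2 q3 q4 :: "'k::alg_closed_field pol3" and \<phi> :: "'a \<Rightarrow> 'k v3"
  assumes inf: "infinite U"
    and pts: "\<And>u. u \<in> U \<Longrightarrow> \<phi> u \<noteq> (0, 0, 0) \<and> ev A (\<phi> u) = 0 \<and> (ev q2 (\<phi> u) \<noteq> 0 \<or> ev q3 (\<phi> u) \<noteq> 0)"
    and inj: "\<And>u v. u \<in> U \<Longrightarrow> v \<in> U \<Longrightarrow> proportional (\<phi> u) (\<phi> v) \<Longrightarrow> u = v"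
  shows "\<not> finite_sing ([:A:] * [:q4, q3, q2:])"
proof -
  define z where
    "z u = (SOME z. z ^ 2 * ev q2 (\<phi> u) + z * ev q3 (\<phi> u) + ev q4 (\<phi> u) = 0)" for u
  have z: "z u ^ 2 * ev q2 (\<phi> u) + z u * ev q3 (\<phi> u) + ev q4 (\<phi> u) = 0" if "u \<in> U" for u
    unfolding z_def by (rule someI_ex) (use quadratic_has_root pts[OF that] in blast)
  show ?thesis
  proof (rule not_finite_sing_if_infinite_family[OF inf])
    show "point4 (\<phi> u) (z u) \<in> sing_vecs ([:A:] * [:q4, q3, q2:])" if "u \<in> U" for u
      using pts[OF that] z[OF that]
      by (intro sing_vecs_mult) (simp_all add: eval4_point4 point4_eq_0_iff algebra_simps power2_eq_square)
    show "u = v" if "u \<in> U" "v \<in> U" "point4 (\<phi> v) (z v) = smul c (point4 (\<phi> u) (z u))" for u v c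
      using that inj unfolding point4_eq_smul_iff proportional_def by blast
  qed
qed

lemma not_finite_sing_if_vertex_on_component:
  fixes A q2 q3 q4 :: "'k::alg_closed_field pol3"
  assumes "x \<noteq> (0, 0, 0)" "ev A x = 0" "ev q2 x = 0" "ev q3 x = 0" "ev q4 x = 0"
  shows "\<not> finite_sing ([:A:] * [:q4, q3, q2:])"
proof (rule not_finite_sing_if_infinite_family[OF infinite_UNIV_alg_closed])
  show "point4 x z \<in> sing_vecs ([:A:] * [:q4, q3, q2:])" for z
    using assms by (intro sing_vecs_mult) (simp_all add: eval4_point4 point4_eq_0_iff)
  fix z z' c assume "point4 x z' = smul c (point4 x z)"
  hence "x = sc c x" "z' = c * z" by (simp_all add: point4_eq_smul_iff)
  moreover from this have "c = 1"
    using assms(1) by (cases x rule: v3_cases) (auto simp: algebra_simps)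
  ultimately show "z = z'" by simp
qed

lemma not_finite_sing_if_conic_divides:
  fixes f2 a b :: "'k::alg_closed_field pol3"
  assumes MN: "inverse3 M N" and f2: "\<And>y0 y1 y2. ev f2 (appl M (y0, y1, y2)) = k * (y0 ^ 2 - y1 * y2)"
  shows "\<not> finite_sing (quartic f2 (f2 * a) (f2 * b))"
proof -
  have "quartic f2 (f2 * a) (f2 * b) = [:f2:] * [:b, a, 1:]" by (simp add: quartic_def)
  moreover have "\<not> finite_sing ([:f2:] * [:b, a, 1:])"
  proof (rule not_finite_sing_if_family_on_component[OF infinite_UNIV_alg_closed])
    fix u :: 'k
    have "appl N (appl M (u, 1, u ^ 2)) = (u, 1, u ^ 2)" by (rule inverse3D(1)[OF MN])
    hence "appl M (u, 1, u ^ 2) \<noteq> (0, 0, 0)" by auto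
    moreover have "ev f2 (appl M (u, 1, u ^ 2)) = 0" by (simp add: f2 power2_eq_square)
    ultimately show "appl M (u, 1, u ^ 2) \<noteq> (0, 0, 0) \<and> ev f2 (appl M (u, 1, u ^ 2)) = 0 \<and>
        (ev 1 (appl M (u, 1, u ^ 2)) \<noteq> 0 \<or> ev a (appl M (u, 1, u ^ 2)) \<noteq> 0)"
      by (cases "appl M (u, 1, u ^ 2)" rule: v3_cases) simp
  next
    fix u v assume "proportional (appl M (u, 1, u ^ 2)) (appl M (v, 1, v ^ 2))"
    then obtain c where "appl M (v, 1, v ^ 2) = sc c (appl M (u, 1, u ^ 2))"
      unfolding proportional_def by blast
    hence "appl N (appl M (v, 1, v ^ 2)) = sc c (appl N (appl M (u, 1, u ^ 2)))" by (simp add: appl_sc)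
    hence "(v, 1, v ^ 2) = sc c (u, 1, u ^ 2)" by (simp only: inverse3D(1)[OF MN])
    thus "u = v" by simp
  qed
  ultimately show ?thesis by simp
qed

lemma ev_on_affine_line_is_poly: "\<exists>P. \<forall>t. ev q (vadd x (sc t y)) = poly P t"
proof -
  obtain D where D: "degs_le3 q D" using degs_le3_exists by blast
  obtain x0 x1 x2 where x: "x = (x0, x1, x2)" by (rule v3_cases)
  obtain y0 y1 y2 where y: "y = (y0, y1, y2)" by (rule v3_cases)
  show ?thesis
    by (rule exI[of _ "monomial_sum (\<lambda>c. [:c:]) q D [:x0, y0:] [:x1, y1:] [:x2, y2:]"])
       (simp add: x y poly_monomial_sum eval3_monomial_sum[OF D] mult.commute)
qed

lemma ev_eq_0_if_cofinite_zeros_on_line: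
  fixes q :: "'k::alg_closed_field pol3"
  assumes "finite A" and "\<And>t. t \<notin> A \<Longrightarrow> ev q (vadd x (sc t y)) = 0"
  shows "ev q x = 0"
proof -
  obtain P where P: "\<And>t. ev q (vadd x (sc t y)) = poly P t" using ev_on_affine_line_is_poly by blast
  have "P = 0" using assms P by (intro poly_eq_0_if_cofinite_roots[OF assms(1)]) auto
  thus ?thesis using P[of 0] by (cases x rule: v3_cases; cases y rule: v3_cases) simp
qed

lemma cofactor_scale:
  fixes f q :: "'k::alg_closed_field pol3"
  assumes l: "l \<noteq> (0, 0, 0)" and h: "homogeneous3 d f" and d: "d > 0" and fq: "f = lin3 l * q"
    and u: "u \<noteq> 0"
  shows "ev q (sc u x) = u ^ (d - 1) * ev q x"
proof -
  define U :: "'k m3" where "U = ((u, 0, 0), (0, u, 0), (0, 0, u))"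
  have U: "appl U z = sc u z" for z by (cases z rule: v3_cases) (simp add: U_def)
  have "lin3 l * subst3 U q = lin3 l * (C3 (u ^ (d - 1)) * q)"
  proof (rule pol3_eqI)
    fix z
    have "u * (dot l z * ev q (sc u z)) = ev f (sc u z)" by (simp add: fq dot_sc)
    also have "\<dots> = u ^ d * ev f z" by (rule homogeneous3_scale[OF h])
    also have "\<dots> = u * (dot l z * (u ^ (d - 1) * ev q z))"
      using d by (simp add: fq power_eq_if)
    finally have "u * (dot l z * ev q (sc u z)) = u * (dot l z * (u ^ (d - 1) * ev q z))" .
    thus "ev (lin3 l * subst3 U q) z = ev (lin3 l * (C3 (u ^ (d - 1)) * q)) z"
      using u by (simp add: ev_subst3 U)
  qed
  moreover have "lin3 l \<noteq> 0"
  proof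
    assume "lin3 l = 0"
    hence "dot l z = 0" for z using ev_lin3[of l z] by (cases z rule: v3_cases) simp
    thus False using l eq_0_if_dot_eq_0 by blast
  qed
  ultimately have "subst3 U q = C3 (u ^ (d - 1)) * q" by simp
  thus ?thesis using ev_subst3[of U q x] by (simp add: U)
qed

text \<open>As \<open>c + u b = u (b + c / u)\<close>, the polynomial \<open>u \<mapsto> q (c + u b)\<close> agrees with \<open>\<kappa> u\<^sup>m\<close> for
  \<open>u \<noteq> 0\<close>, hence vanishes at \<open>u = 0\<close>.\<close>

lemma vanishes_at_infinity_if_constant_on_line:
  fixes q :: "'k::alg_closed_field pol3"
  assumes scale: "\<And>u x. u \<noteq> 0 \<Longrightarrow> ev q (sc u x) = u ^ m * ev q x" and m: "m > 0"
    and const: "\<And>t. ev q (vadd b (sc t c)) = \<kappa>"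
  shows "ev q c = 0"
proof -
  obtain R where R: "\<And>u. ev q (vadd c (sc u b)) = poly R u"
    using ev_on_affine_line_is_poly by blast
  have "R - smult \<kappa> (monom 1 m) = 0"
  proof (rule poly_eq_0_if_cofinite_roots[of "{0}"])
    fix u :: 'k assume "u \<notin> {0}"
    hence "vadd c (sc u b) = sc u (vadd b (sc (1 / u) c))"
      by (cases b rule: v3_cases; cases c rule: v3_cases) (simp add: field_simps)
    thus "poly (R - smult \<kappa> (monom 1 m)) u = 0"
      using R[of u] scale \<open>u \<notin> {0}\<close> const by (simp add: poly_monom mult.commute)
  qed simp
  hence "poly R 0 = 0" using m by (simp add: poly_monom)
  thus ?thesis using R[of 0] by (cases b rule: v3_cases; cases c rule: v3_cases) simp
qed

lemma appl_as_combination: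
  "appl M (0, s, t) = vadd (sc s (appl M (0, 1, 0))) (sc t (appl M (0, 0, 1)))"
  by (cases M rule: m3_cases) (simp add: algebra_simps)

lemma kernel_basis:
  fixes l :: "'k::field v3"
  assumes "l \<noteq> (0, 0, 0)"
  obtains b c where "dot l b = 0" "dot l c = 0"
    and "\<And>s t. vadd (sc s b) (sc t c) = (0, 0, 0) \<Longrightarrow> s = 0 \<and> t = 0"
proof -
  obtain N M where NM: "inverse3 N M" and Nl: "\<And>x. fst (appl N x) = dot l x"
    using linear_form_as_coordinate[OF assms] by blast
  show ?thesis
  proof (rule that[of "appl M (0, 1, 0)" "appl M (0, 0, 1)"])
    show "dot l (appl M (0, 1, 0)) = 0" "dot l (appl M (0, 0, 1)) = 0"
      using Nl inverse3D(2)[OF NM] by (metis fst_conv)+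
    fix s t assume "vadd (sc s (appl M (0, 1, 0))) (sc t (appl M (0, 0, 1))) = (0, 0, 0)"
    hence "appl N (appl M (0, s, t)) = (0, 0, 0)" by (simp add: appl_as_combination[symmetric])
    thus "s = 0 \<and> t = 0" using inverse3D(2)[OF NM] by simp
  qed
qed

lemma cofactors_vanish_at_point_of_line:
  fixes q2 q3 q4 :: "'k::alg_closed_field pol3"
  assumes scale: "\<And>u x. u \<noteq> 0 \<Longrightarrow> ev q2 (sc u x) = u ^ 1 * ev q2 x"
      "\<And>u x. u \<noteq> 0 \<Longrightarrow> ev q3 (sc u x) = u ^ 2 * ev q3 x"
      "\<And>u x. u \<noteq> 0 \<Longrightarrow> ev q4 (sc u x) = u ^ 3 * ev q4 x"
    and zero: "\<And>t. ev q2 (vadd b (sc t c)) = 0" "\<And>t. ev q3 (vadd b (sc t c)) = 0"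
  obtains x where "x = c \<or> (\<exists>t. x = vadd b (sc t c))" "ev q2 x = 0" "ev q3 x = 0" "ev q4 x = 0"
proof -
  obtain P4 where P4: "\<And>t. ev q4 (vadd b (sc t c)) = poly P4 t" using ev_on_affine_line_is_poly by blast
  show ?thesis
  proof (cases "\<exists>t. poly P4 t = 0")
    case True
    then obtain t where "poly P4 t = 0" by blast
    thus ?thesis using that[of "vadd b (sc t c)"] zero P4 by auto
  next
    case False
    hence "degree P4 = 0" using alg_closed_imp_poly_has_root by blast
    then obtain \<kappa> where "P4 = [:\<kappa>:]" by (rule degree_eq_zeroE)
    hence "ev q4 (vadd b (sc t c)) = \<kappa>" for t using P4 by simp
    hence "ev q2 c = 0" "ev q3 c = 0" "ev q4 c = 0"
      using zero scale by (metis vanishes_at_infinity_if_constant_on_line zero_less_numeral zero_less_one)+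
    thus ?thesis using that[of c] by blast
  qed
qed

lemma not_finite_sing_if_line_divides:
  fixes f2 f3 f4 q2 q3 q4 :: "'k::alg_closed_field pol3"
  assumes l: "l \<noteq> (0, 0, 0)"
    and h2: "homogeneous3 2 f2" and h3: "homogeneous3 3 f3" and h4: "homogeneous3 4 f4"
    and e2: "f2 = lin3 l * q2" and e3: "f3 = lin3 l * q3" and e4: "f4 = lin3 l * q4"
  shows "\<not> finite_sing (quartic f2 f3 f4)"
proof -
  obtain b c where b: "dot l b = 0" and c: "dot l c = 0"
    and indep: "\<And>s t. vadd (sc s b) (sc t c) = (0, 0, 0) \<Longrightarrow> s = 0 \<and> t = 0"
    using kernel_basis[OF l] by blast
  have on_line: "dot l (vadd (sc s b) (sc t c)) = 0" for s t by (simp add: dot_vadd dot_sc b c)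
  have sc1: "vadd b (sc t c) = vadd (sc 1 b) (sc t c)" for t by (cases b rule: v3_cases) simp
  obtain P2 P3 where P: "\<And>t. ev q2 (vadd b (sc t c)) = poly P2 t" "\<And>t. ev q3 (vadd b (sc t c)) = poly P3 t"
    using ev_on_affine_line_is_poly by meson
  have F: "quartic f2 f3 f4 = [:lin3 l:] * [:q4, q3, q2:]" by (simp add: quartic_def e2 e3 e4)
  show ?thesis unfolding F
  proof (cases "P2 = 0 \<and> P3 = 0")
    case False
    define U where "U = {t. poly P2 t \<noteq> 0 \<or> poly P3 t \<noteq> 0}"
    have "- U \<subseteq> {t. poly P2 t = 0}" "- U \<subseteq> {t. poly P3 t = 0}" by (auto simp: U_def)
    moreover have "finite {t. poly P2 t = 0} \<or> finite {t. poly P3 t = 0}"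
      using False poly_roots_finite by blast
    ultimately have "finite (- U)" using finite_subset by blast
    hence "infinite (UNIV - (- U))" using infinite_UNIV_alg_closed by (rule Diff_infinite_finite)
    hence "infinite U" by (simp add: Compl_eq_Diff_UNIV[symmetric])
    thus "\<not> finite_sing ([:lin3 l:] * [:q4, q3, q2:])"
    proof (rule not_finite_sing_if_family_on_component)
      fix u assume "u \<in> U"
      thus "vadd b (sc u c) \<noteq> (0, 0, 0) \<and> ev (lin3 l) (vadd b (sc u c)) = 0 \<and>
          (ev q2 (vadd b (sc u c)) \<noteq> 0 \<or> ev q3 (vadd b (sc u c)) \<noteq> 0)"
        using indep[of 1 u] on_line[of 1 u] by (auto simp: P U_def simp flip: sc1)
    next
      fix u v assume "proportional (vadd b (sc u c)) (vadd b (sc v c))"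
      then obtain k where "vadd (sc (1 - k) b) (sc (v - k * u) c) = (0, 0, 0)"
        by (cases b rule: v3_cases; cases c rule: v3_cases) (auto simp: proportional_def algebra_simps)
      thus "u = v" using indep by fastforce
    qed
  next
    case True
    have scale: "ev q2 (sc u x) = u ^ 1 * ev q2 x" "ev q3 (sc u x) = u ^ 2 * ev q3 x"
      "ev q4 (sc u x) = u ^ 3 * ev q4 x" if "u \<noteq> 0" for u x
      using cofactor_scale[OF l h2 _ e2 that] cofactor_scale[OF l h3 _ e3 that]
        cofactor_scale[OF l h4 _ e4 that] by simp_all
    have zero: "ev q2 (vadd b (sc t c)) = 0" "ev q3 (vadd b (sc t c)) = 0" for t
      using True P by simp_all
    obtain x where x: "x = c \<or> (\<exists>t. x = vadd b (sc t c))" "ev q2 x = 0" "ev q3 x = 0" "ev q4 x = 0"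
      by (rule cofactors_vanish_at_point_of_line[OF scale zero])
    moreover have "c \<noteq> (0, 0, 0)" using indep[of 0 1] by (cases b rule: v3_cases) auto
    hence "x \<noteq> (0, 0, 0) \<and> dot l x = 0"
      using x(1) c indep[of 1] on_line[of 1] by (auto simp flip: sc1)
    ultimately show "\<not> finite_sing ([:lin3 l:] * [:q4, q3, q2:])"
      by (intro not_finite_sing_if_vertex_on_component[of x]) simp_all
  qed
qed

section \<open>Classification of quadratic forms\<close>

definition qform :: "'k::comm_ring_1 \<Rightarrow> 'k \<Rightarrow> 'k \<Rightarrow> 'k \<Rightarrow> 'k \<Rightarrow> 'k \<Rightarrow> 'k v3 \<Rightarrow> 'k" where
  "qform a b c d e f x = (case x of (x0, x1, x2) \<Rightarrow>
     a * x0 ^ 2 + b * x1 ^ 2 + c * x2 ^ 2 + d * x0 * x1 + e * x0 * x2 + f * x1 * x2)"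

lemma qform_simp [simp]:
  "qform a b c d e f (x0, x1, x2) =
     a * x0 ^ 2 + b * x1 ^ 2 + c * x2 ^ 2 + d * x0 * x1 + e * x0 * x2 + f * x1 * x2"
  by (simp add: qform_def)

definition product_of_linear_forms :: "('k::comm_ring_1 v3 \<Rightarrow> 'k) \<Rightarrow> bool" where
  "product_of_linear_forms q \<longleftrightarrow>
     (\<exists>l m. l \<noteq> (0, 0, 0) \<and> m \<noteq> (0, 0, 0) \<and> (\<forall>x. q x = dot l x * dot m x))"

definition equivalent_to_normal_conic :: "('k::comm_ring_1 v3 \<Rightarrow> 'k) \<Rightarrow> bool" where
  "equivalent_to_normal_conic q \<longleftrightarrow>
     (\<exists>M N k. k \<noteq> 0 \<and> inverse3 M N \<and> (\<forall>y0 y1 y2. q (appl M (y0, y1, y2)) = k * (y0 ^ 2 - y1 * y2)))"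

lemma binary_quadratic_factors:
  fixes B E C :: "'k::alg_closed_field"
  obtains p1 p2 r1 r2
  where "\<And>x1 x2. B * x1 ^ 2 + E * x1 * x2 + C * x2 ^ 2 = (p1 * x1 + p2 * x2) * (r1 * x1 + r2 * x2)"
proof (cases "B = 0")
  case True
  thus ?thesis using that[of 0 1 E C] by (simp add: algebra_simps power2_eq_square)
next
  case False
  obtain \<rho> where "\<rho> ^ 2 * B + \<rho> * E + C = 0" using quadratic_has_root False by blast
  hence C: "C = - (\<rho> ^ 2 * B + \<rho> * E)" by algebra
  have "B * x1 ^ 2 + E * x1 * x2 + C * x2 ^ 2 = (B * x1 + (- B * \<rho>) * x2) * (1 * x1 + (E / B + \<rho>) * x2)"
    for x1 x2 using False unfolding C by (simp add: field_simps power2_eq_square)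
  thus ?thesis by (rule that)
qed

lemma qform_complete_square:
  fixes a b c d e f :: "'k::field"
  assumes "(2::'k) \<noteq> 0" "a \<noteq> 0"
  obtains u1 u2 B E C where "\<And>x0 x1 x2. qform a b c d e f (x0, x1, x2) =
    a * (x0 + u1 * x1 + u2 * x2) ^ 2 + (B * x1 ^ 2 + E * x1 * x2 + C * x2 ^ 2)"
proof -
  define w where "w = inverse (2 * a)"
  have "2 * a * w = 1" using assms by (simp add: w_def)
  hence "qform a b c d e f (x0, x1, x2) = a * (x0 + d * w * x1 + e * w * x2) ^ 2 +
    ((b - a * (d * w) ^ 2) * x1 ^ 2 + (f - 2 * a * (d * w) * (e * w)) * x1 * x2 +
     (c - a * (e * w) ^ 2) * x2 ^ 2)" for x0 x1 x2
    by simp algebra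
  thus ?thesis by (rule that)
qed

lemma product_of_linear_forms_if_dependent_factors:
  fixes q :: "'k::alg_closed_field v3 \<Rightarrow> 'k"
  assumes a: "a \<noteq> 0" and q: "\<And>x. q x = a * dot (1, u1, u2) x ^ 2 + dot (0, p1, p2) x * dot (0, r1, r2) x"
    and dep: "p1 * r2 = r1 * p2"
  shows "product_of_linear_forms q"
proof -
  define U P :: "'k v3" where "U = (1, u1, u2)" and "P = (0, p1, p2)"
  obtain \<kappa> where \<kappa>: "\<And>x. dot P x * dot (0, r1, r2) x = \<kappa> * dot P x ^ 2"
  proof (cases "(p1, p2) = (0, 0)")
    case True thus ?thesis using that[of 0] by (simp add: P_def)
  next
    case False
    then obtain \<kappa> where "r1 = \<kappa> * p1" "r2 = \<kappa> * p2" using proportional_pairs dep by blast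
    hence "dot (0, r1, r2) x = \<kappa> * dot P x" for x
      by (cases x rule: v3_cases) (simp add: P_def algebra_simps)
    thus ?thesis using that[of \<kappa>] by (simp add: power2_eq_square)
  qed
  obtain \<rho> where \<rho>: "\<rho> ^ 2 = - \<kappa> / a" using nth_root_exists[of 2 "- \<kappa> / a"] by auto
  define l m where "l = sc a (vadd U (sc (- \<rho>) P))" and "m = vadd U (sc \<rho> P)"
  have "\<kappa> = - a * \<rho> ^ 2" using \<rho> a by simp
  hence qU: "q x = a * dot U x ^ 2 - a * \<rho> ^ 2 * dot P x ^ 2" for x
    using q[of x] \<kappa>[of x] by (simp add: U_def P_def)
  have "q x = dot l x * dot m x" for x
    unfolding qU by (cases x rule: v3_cases) (simp add: U_def P_def l_def m_def algebra_simps power2_eq_square)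
  moreover have "l \<noteq> (0, 0, 0)" "m \<noteq> (0, 0, 0)" using a by (simp_all add: l_def m_def U_def P_def)
  ultimately show ?thesis unfolding product_of_linear_forms_def by blast
qed

lemma equivalent_to_normal_conic_if_independent_factors:
  fixes q :: "'k::field v3 \<Rightarrow> 'k"
  assumes a: "a \<noteq> 0" and q: "\<And>x. q x = a * dot (1, u1, u2) x ^ 2 + dot (0, p1, p2) x * dot (0, r1, r2) x"
    and indep: "p1 * r2 \<noteq> r1 * p2"
  shows "equivalent_to_normal_conic q"
proof -
  define U P R :: "'k v3" where "U = (1, u1, u2)" and "P = (0, p1, p2)" and "R = (0, r1, r2)"
  define Mi :: "'k m3" where "Mi = (U, sc (- 1 / a) P, R)"
  have "det3 Mi = (r1 * p2 - p1 * r2) / a"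
    by (simp add: det3_def Mi_def U_def P_def R_def diff_divide_distrib)
  hence "det3 Mi \<noteq> 0" using indep a by simp
  then obtain M where M: "inverse3 M Mi" using inverse3_if_det3_nonzero inverse3_sym by blast
  have "q (appl M (y0, y1, y2)) = a * (y0 ^ 2 - y1 * y2)" for y0 y1 y2
  proof -
    have "appl Mi (appl M (y0, y1, y2)) = (y0, y1, y2)" by (rule inverse3D(1)[OF M])
    hence "dot U (appl M (y0, y1, y2)) = y0" "- 1 / a * dot P (appl M (y0, y1, y2)) = y1"
      "dot R (appl M (y0, y1, y2)) = y2"
      by (simp_all add: Mi_def dot_sc_left)
    moreover from this(2) have "dot P (appl M (y0, y1, y2)) = - a * y1"
      using a by (simp add: field_simps minus_equation_iff)
    ultimately show ?thesis by (simp add: q U_def P_def R_def algebra_simps power2_eq_square)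
  qed
  thus ?thesis unfolding equivalent_to_normal_conic_def using M a by blast
qed

lemma qform_classification_if_x0_square:
  fixes a b c d e f :: "'k::alg_closed_field"
  assumes two: "(2::'k) \<noteq> 0" and a: "a \<noteq> 0"
  shows "product_of_linear_forms (qform a b c d e f) \<or> equivalent_to_normal_conic (qform a b c d e f)"
proof -
  obtain u1 u2 B E C where sq: "\<And>x0 x1 x2. qform a b c d e f (x0, x1, x2) =
      a * (x0 + u1 * x1 + u2 * x2) ^ 2 + (B * x1 ^ 2 + E * x1 * x2 + C * x2 ^ 2)"
    using qform_complete_square[OF two a, where b = b and c = c and d = d and e = e and f = f]
    by blast
  obtain p1 p2 r1 r2 where pr: "\<And>x1 x2.
      B * x1 ^ 2 + E * x1 * x2 + C * x2 ^ 2 = (p1 * x1 + p2 * x2) * (r1 * x1 + r2 * x2)"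
    using binary_quadratic_factors[of B E C] by blast
  have "qform a b c d e f (x0, x1, x2) = a * dot (1, u1, u2) (x0, x1, x2) ^ 2 +
      dot (0, p1, p2) (x0, x1, x2) * dot (0, r1, r2) (x0, x1, x2)" for x0 x1 x2
    unfolding sq pr by simp
  hence "qform a b c d e f x = a * dot (1, u1, u2) x ^ 2 + dot (0, p1, p2) x * dot (0, r1, r2) x" for x
    by (metis v3_cases)
  thus ?thesis
    using product_of_linear_forms_if_dependent_factors[OF a]
      equivalent_to_normal_conic_if_independent_factors[OF a] by blast
qed

definition tappl :: "'k::comm_ring_1 m3 \<Rightarrow> 'k v3 \<Rightarrow> 'k v3" where
  "tappl M l = (case M of (r0, r1, r2) \<Rightarrow> case l of (l0, l1, l2) \<Rightarrow>
     vadd (vadd (sc l0 r0) (sc l1 r1)) (sc l2 r2))"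

definition mmul :: "'k::comm_ring_1 m3 \<Rightarrow> 'k m3 \<Rightarrow> 'k m3" where
  "mmul A B = (case A of (a0, a1, a2) \<Rightarrow> (tappl B a0, tappl B a1, tappl B a2))"

lemma dot_appl: "dot l (appl M x) = dot (tappl M l) x"
  by (cases M rule: m3_cases; cases l rule: v3_cases; cases x rule: v3_cases)
     (simp add: tappl_def algebra_simps)

lemma appl_mmul: "appl (mmul A B) y = appl A (appl B y)"
  by (cases A) (simp add: mmul_def dot_appl)

lemma inverse3_mmul:
  assumes "inverse3 A A'" "inverse3 B B'"
  shows "inverse3 (mmul A B) (mmul B' A')"
  unfolding inverse3_def by (simp add: appl_mmul inverse3D[OF assms(1)] inverse3D[OF assms(2)])

lemma classification_subst:
  assumes P: "inverse3 P P'"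
    and q: "product_of_linear_forms (\<lambda>x. q (appl P x)) \<or> equivalent_to_normal_conic (\<lambda>x. q (appl P x))"
  shows "product_of_linear_forms q \<or> equivalent_to_normal_conic q"
proof -
  have qP: "q x = q (appl P (appl P' x))" for x using inverse3D(2)[OF P] by simp
  from q show ?thesis
  proof
    assume "product_of_linear_forms (\<lambda>x. q (appl P x))"
    then obtain l m where l: "l \<noteq> (0, 0, 0)" and m: "m \<noteq> (0, 0, 0)"
      and lm: "\<And>x. q (appl P x) = dot l x * dot m x"
      unfolding product_of_linear_forms_def by blast
    have nz: "tappl P' n \<noteq> (0, 0, 0)" if "n \<noteq> (0, 0, 0)" for n
    proof
      assume "tappl P' n = (0, 0, 0)"
      hence "dot n (appl P' z) = 0" for z by (simp add: dot_appl)
      hence "dot n y = 0" for y using inverse3D(1)[OF P, of y] by metis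
      hence "n = (0, 0, 0)" by (rule eq_0_if_dot_eq_0)
      thus False using that by simp
    qed
    have "q x = dot (tappl P' l) x * dot (tappl P' m) x" for x
      using qP[of x] lm[of "appl P' x"] by (simp add: dot_appl)
    thus ?thesis unfolding product_of_linear_forms_def using nz l m by blast
  next
    assume "equivalent_to_normal_conic (\<lambda>x. q (appl P x))"
    then obtain M N k where k: "k \<noteq> 0" and MN: "inverse3 M N"
      and eq: "\<And>y0 y1 y2. q (appl P (appl M (y0, y1, y2))) = k * (y0 ^ 2 - y1 * y2)"
      unfolding equivalent_to_normal_conic_def by blast
    have "q (appl (mmul P M) (y0, y1, y2)) = k * (y0 ^ 2 - y1 * y2)" for y0 y1 y2
      by (simp only: appl_mmul eq)
    thus ?thesis
      using k inverse3_mmul[OF P MN] unfolding equivalent_to_normal_conic_def by blast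
  qed
qed

lemma qform_classification:
  fixes a b c d e f :: "'k::alg_closed_field"
  assumes two: "(2::'k) \<noteq> 0" and nz: "(a, b, c, d, e, f) \<noteq> (0, 0, 0, 0, 0, 0)"
  shows "product_of_linear_forms (qform a b c d e f) \<or> equivalent_to_normal_conic (qform a b c d e f)"
    (is "?P (qform a b c d e f)")
proof -
  have subst: "?P (qform a b c d e f)"
    if det: "det3 P \<noteq> 0" and a': "a' \<noteq> 0"
      and eq: "\<And>x0 x1 x2. qform a b c d e f (appl P (x0, x1, x2)) = qform a' b' c' d' e' f' (x0, x1, x2)"
    for P and a' b' c' d' e' f' :: 'k
  proof -
    obtain P' where P: "inverse3 P P'" using det inverse3_if_det3_nonzero by blast
    have "(\<lambda>x. qform a b c d e f (appl P x)) = qform a' b' c' d' e' f'"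
    proof
      fix x :: "'k v3"
      obtain x0 x1 x2 where x: "x = (x0, x1, x2)" by (rule v3_cases)
      show "qform a b c d e f (appl P x) = qform a' b' c' d' e' f' x" unfolding x by (rule eq)
    qed
    thus ?thesis
      using classification_subst[OF P] qform_classification_if_x0_square[OF two a'] by metis
  qed
  \<comment> \<open>swapping coordinates or shearing \<open>x1 := x0 + x1\<close>, \<open>x2 := x0 + x2\<close> creates an \<open>x0\<^sup>2\<close> term\<close>
  consider "a \<noteq> 0" | "b \<noteq> 0" | "c \<noteq> 0" | "a = 0" "b = 0" "c = 0" "d \<noteq> 0"
    | "a = 0" "b = 0" "c = 0" "d = 0" "e \<noteq> 0" | "a = 0" "b = 0" "c = 0" "d = 0" "e = 0" "f \<noteq> 0"
    using nz by auto
  thus ?thesis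
  proof cases
    case 1
    thus ?thesis using qform_classification_if_x0_square[OF two] by blast
  next
    case 2
    thus ?thesis
      by (intro subst[of "((0, 1, 0), (1, 0, 0), (0, 0, 1))" b a c d f e])
         (simp_all add: det3_def algebra_simps)
  next
    case 3
    thus ?thesis
      by (intro subst[of "((0, 0, 1), (0, 1, 0), (1, 0, 0))" c b a f e d])
         (simp_all add: det3_def algebra_simps)
  next
    case 4
    thus ?thesis
      by (intro subst[of "((1, 0, 0), (1, 1, 0), (0, 0, 1))" d 0 0 d "e + f" f])
         (simp_all add: det3_def algebra_simps power2_eq_square)
  next
    case 5
    thus ?thesis
      by (intro subst[of "((1, 0, 0), (0, 1, 0), (1, 0, 1))" e 0 0 f e f])
         (simp_all add: det3_def algebra_simps power2_eq_square)
  next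
    case 6
    have "qform a b c d e f x = dot (0, f, 0) x * dot (0, 0, 1) x" for x
      using 6 by (cases x rule: v3_cases) simp
    moreover have "(0, f, 0) \<noteq> (0, 0, 0)" "(0, 0, 1) \<noteq> (0, 0, (0::'k))" using 6 by simp_all
    ultimately show ?thesis unfolding product_of_linear_forms_def by blast
  qed
qed

lemma homogeneous3_2_as_qform:
  fixes f :: "'k::comm_ring_1 pol3"
  assumes h: "homogeneous3 2 f"
  shows "ev f x = qform (mcoeff3 f 2 0 0) (mcoeff3 f 0 2 0) (mcoeff3 f 0 0 2)
                        (mcoeff3 f 1 1 0) (mcoeff3 f 1 0 1) (mcoeff3 f 0 1 1) x"
proof -
  obtain x0 x1 x2 where x: "x = (x0, x1, x2)" by (rule v3_cases)
  have z: "i + j + l \<noteq> 2 \<Longrightarrow> mcoeff3 f i j l = 0" for i j l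
    using h unfolding homogeneous3_def by blast
  have s: "(\<Sum>i\<le>2. g i) = g 0 + g 1 + g (2::nat)" for g :: "nat \<Rightarrow> 'k"
    by (simp add: numeral_2_eq_2)
  show ?thesis unfolding x
    by (simp add: eval3_monomial_sum[OF homogeneous3_imp_degs_le3[OF h]] monomial_sum_def s z
        power2_eq_square mult_ac)
qed

lemma quadric_classification:
  fixes f :: "'k::alg_closed_field pol3"
  assumes two: "(2::'k) \<noteq> 0" and h: "homogeneous3 2 f" and nz: "f \<noteq> 0"
  shows "product_of_linear_forms (ev f) \<or> equivalent_to_normal_conic (ev f)"
proof -
  let ?c = "(mcoeff3 f 2 0 0, mcoeff3 f 0 2 0, mcoeff3 f 0 0 2, mcoeff3 f 1 1 0, mcoeff3 f 1 0 1, mcoeff3 f 0 1 1)"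
  have q: "ev f = qform (mcoeff3 f 2 0 0) (mcoeff3 f 0 2 0) (mcoeff3 f 0 0 2)
                        (mcoeff3 f 1 1 0) (mcoeff3 f 1 0 1) (mcoeff3 f 0 1 1)"
    using homogeneous3_2_as_qform[OF h] by blast
  have "?c \<noteq> (0, 0, 0, 0, 0, 0)"
  proof
    assume "?c = (0, 0, 0, 0, 0, 0)"
    hence "ev f x = ev 0 x" for x by (cases x rule: v3_cases) (simp add: q)
    hence "f = 0" by (rule pol3_eqI)
    thus False using nz by simp
  qed
  thus ?thesis unfolding q by (rule qform_classification[OF two])
qed

section \<open>Lines of \<open>X\<close> through \<open>P\<close>\<close>

lemma lin3_mult_dvd_if_dvd:
  fixes g :: "'k::alg_closed_field pol3"
  assumes l: "l \<noteq> (0, 0, 0)" and m: "m \<noteq> (0, 0, 0)" and dl: "lin3 l dvd g" and dm: "lin3 m dvd g"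
    and y: "dot m y = 0" "dot l y \<noteq> 0"
  shows "lin3 l * lin3 m dvd g"
proof -
  obtain q where q: "g = lin3 l * q" using dl by (elim dvdE)
  have "ev q x = 0" if mx: "dot m x = 0" for x
  proof (rule ev_eq_0_if_cofinite_zeros_on_line[of "{- dot l x / dot l y}"])
    fix t assume t: "t \<notin> {- dot l x / dot l y}"
    have "dot l x + t * dot l y \<noteq> 0"
    proof
      assume "dot l x + t * dot l y = 0"
      hence "t = - dot l x / dot l y" using y(2) by (simp add: field_simps add_eq_0_iff2)
      thus False using t by simp
    qed
    hence "dot l (vadd x (sc t y)) \<noteq> 0" by (simp add: dot_vadd dot_sc)
    moreover have "ev g (vadd x (sc t y)) = 0"
      using dm mx y(1) by (auto simp: dot_vadd dot_sc elim!: dvdE)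
    ultimately show "ev q (vadd x (sc t y)) = 0" by (simp add: q)
  qed simp
  hence "lin3 m dvd q" by (rule lin3_dvd_if_vanishes_on_line[OF m])
  thus ?thesis by (simp add: q)
qed

definition line_of :: "'k::idom v3 \<Rightarrow> 'k pt set" where
  "line_of x = span2 P0 (point4 x 0)"

lemma lin_comb_P0: "lin_comb s P0 t (a0, a1, a2, a3) = (t * a0, t * a1, t * a2, s + t * a3)"
  by (simp add: lin_comb_def P0_def)

lemma span2_P0: "span2 P0 (a0, a1, a2, a3::'k::idom) = {(t * a0, t * a1, t * a2, z) | z t. True}"
  unfolding span2_def lin_comb_P0
proof (intro set_eqI iffI)
  fix w :: "'k pt" assume "w \<in> {(t * a0, t * a1, t * a2, z) |z t. True}"
  then obtain z t where "w = (t * a0, t * a1, t * a2, (z - t * a3) + t * a3)" by auto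
  thus "w \<in> {(t * a0, t * a1, t * a2, s + t * a3) |s t. True}" by blast
qed blast

lemma lin_indep2_P0_iff: "lin_indep2 P0 (a0, a1, a2, a3) \<longleftrightarrow> (a0, a1, a2) \<noteq> (0, 0, (0::'k::idom))"
proof
  assume "lin_indep2 P0 (a0, a1, a2, a3)"
  moreover have "lin_comb (- a3) P0 1 (a0, a1, a2, a3) = (a0, a1, a2, 0)" by (simp add: lin_comb_P0)
  ultimately show "(a0, a1, a2) \<noteq> (0, 0, 0)" unfolding lin_indep2_def by force
next
  assume "(a0, a1, a2) \<noteq> (0, 0, 0)"
  thus "lin_indep2 P0 (a0, a1, a2, a3)" unfolding lin_indep2_def lin_comb_P0 by auto
qed

lemma line_of_proportional:
  fixes x y :: "'k::field v3"
  assumes "proportional x y" "y \<noteq> (0, 0, 0)"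
  shows "line_of x = line_of y"
proof -
  obtain c where c: "y = sc c x" using assms(1) by (auto simp: proportional_def)
  obtain a0 a1 a2 where x: "x = (a0, a1, a2)" by (rule v3_cases)
  have "c \<noteq> 0" using assms(2) c x by auto
  have "{(t * a0, t * a1, t * a2, z) | z t. True} = {(t * (c * a0), t * (c * a1), t * (c * a2), z) | z t. True}"
  proof (intro set_eqI iffI)
    fix w assume "w \<in> {(t * a0, t * a1, t * a2, z) | z t. True}"
    then obtain z t where "w = ((t / c) * (c * a0), (t / c) * (c * a1), (t / c) * (c * a2), z)"
      using \<open>c \<noteq> 0\<close> by auto
    thus "w \<in> {(t * (c * a0), t * (c * a1), t * (c * a2), z) | z t. True}" by blast
  next
    fix w assume "w \<in> {(t * (c * a0), t * (c * a1), t * (c * a2), z) | z t. True}"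
    then obtain z t where "w = ((t * c) * a0, (t * c) * a1, (t * c) * a2, z)" by (auto simp: mult.assoc)
    thus "w \<in> {(t * a0, t * a1, t * a2, z) | z t. True}" by blast
  qed
  thus ?thesis unfolding line_of_def c x by (simp add: point4_def span2_P0)
qed

lemma two_neq_zero_if_CHAR_neq_2:
  assumes "CHAR('k::field) \<noteq> 2"
  shows "(2::'k) \<noteq> 0"
proof
  assume "(2::'k) = 0"
  hence "CHAR('k) dvd 2" using of_nat_eq_0_iff_char_dvd[where 'a = 'k, of 2] by simp
  hence "CHAR('k) \<in> {1, 2}" using dvd_imp_le[of "CHAR('k)" 2] by (cases "CHAR('k)") auto
  thus False using assms CHAR_not_1' by auto
qed

locale quartic_double_point =
  fixes f2 f3 f4 :: "'k::alg_closed_field pol3"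
  assumes two: "(2::'k) \<noteq> 0"
    and h2: "homogeneous3 2 f2" and h3: "homogeneous3 3 f3" and h4: "homogeneous3 4 f4"
    and f2_nz: "f2 \<noteq> 0"
    and isolated: "finite_sing (quartic f2 f3 f4)"
begin

text \<open>By \<open>lines_through_P_eq\<close>, a set of \<open>line_directions\<close> is a set of representatives of
  distinct lines of \<open>X\<close> through \<open>P\<close>.\<close>

definition line_directions :: "'k v3 set \<Rightarrow> bool" where
  "line_directions T \<longleftrightarrow> finite T \<and> pairwise (\<lambda>x y. \<not> proportional x y) T \<and>
     (\<forall>x\<in>T. x \<noteq> (0, 0, 0) \<and> ev f2 x = 0 \<and> ev f3 x = 0 \<and> ev f4 x = 0)"

definition line_count_bounds :: "nat \<Rightarrow> bool" where
  "line_count_bounds n \<longleftrightarrow> n \<le> 8 \<and> (n > 6 \<longrightarrow> (\<exists>g. \<not> is_unit g \<and> g dvd f2 \<and> g dvd f3)) \<and>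
     (n = 8 \<longrightarrow> f2 dvd f3)"

lemma line_directions_subset: "line_directions T \<Longrightarrow> S \<subseteq> T \<Longrightarrow> line_directions S"
  unfolding line_directions_def by (meson finite_subset pairwise_subset subsetD)

lemma card_line_directions_on_line:
  assumes n: "n \<noteq> (0, 0, 0)" and f2: "f2 = lin3 n * r"
    and T: "line_directions T" and on_line: "\<And>x. x \<in> T \<Longrightarrow> dot n x = 0"
  shows "card T \<le> 4" and "\<not> lin3 n dvd f3 \<Longrightarrow> card T \<le> 3"
proof -
  have fin: "finite T" and np: "pairwise (\<lambda>x y. \<not> proportional x y) T"
    and zeros: "\<And>x. x \<in> T \<Longrightarrow> x \<noteq> (0, 0, 0) \<and> ev f3 x = 0 \<and> ev f4 x = 0"
    using T unfolding line_directions_def by auto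
  have dvd: "lin3 n dvd f" if "homogeneous3 d f" "card T > d" "\<And>x. x \<in> T \<Longrightarrow> ev f x = 0" for d f
    using vanishes_on_line_if_many_zeros[OF n that(1) fin that(2) np] zeros on_line that(3)
    by (intro lin3_dvd_if_vanishes_on_line[OF n]) blast
  show three: "card T \<le> 3" if "\<not> lin3 n dvd f3"
    using dvd[OF h3] zeros that by force
  show "card T \<le> 4"
  proof (rule ccontr)
    assume "\<not> card T \<le> 4"
    hence "lin3 n dvd f3" "lin3 n dvd f4" using dvd[OF h3] dvd[OF h4] zeros by auto
    then obtain q3 q4 where "f3 = lin3 n * q3" "f4 = lin3 n * q4" by (elim dvdE)
    thus False using not_finite_sing_if_line_divides[OF n h2 h3 h4 f2] isolated by blast
  qed
qed

lemma line_count_bounds_if_reducible: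
  assumes l: "l \<noteq> (0, 0, 0)" and m: "m \<noteq> (0, 0, 0)" and lm: "\<And>x. ev f2 x = dot l x * dot m x"
    and T: "line_directions T"
  shows "line_count_bounds (card T)"
proof -
  have f2: "f2 = lin3 l * lin3 m" by (rule pol3_eqI) (simp add: lm)
  define Tl Tm where "Tl = T \<inter> {x. dot l x = 0}" and "Tm = T - {x. dot l x = 0}"
  have card: "card T = card Tl + card Tm"
    using T card_Int_Diff unfolding Tl_def Tm_def line_directions_def by blast
  have on_m: "dot m x = 0" if "x \<in> Tm" for x
    using that T lm[of x] unfolding Tm_def line_directions_def by auto
  have Tl: "line_directions Tl" "\<And>x. x \<in> Tl \<Longrightarrow> dot l x = 0"
    and Tm: "line_directions Tm" using line_directions_subset[OF T] by (auto simp: Tl_def Tm_def)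
  have bl: "card Tl \<le> 4" "\<not> lin3 l dvd f3 \<Longrightarrow> card Tl \<le> 3"
    using card_line_directions_on_line[OF l f2 Tl(1)] Tl(2) by blast+
  have f2': "f2 = lin3 m * lin3 l" by (simp add: f2 mult.commute)
  have bm: "card Tm \<le> 4" "\<not> lin3 m dvd f3 \<Longrightarrow> card Tm \<le> 3"
    using card_line_directions_on_line[OF m f2' Tm] on_m by blast+
  have nu: "\<not> is_unit (lin3 n)" for n :: "'k v3"
    by (rule not_unit_if_ev_eq_0[of _ "(0, 0, 0)"]) simp
  have common: "\<exists>g. \<not> is_unit g \<and> g dvd f2 \<and> g dvd f3" if "card T > 6"
  proof (cases "lin3 l dvd f3")
    case True
    thus ?thesis using nu[of l] f2 by auto
  next
    case False
    have "lin3 m dvd f3"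
    proof (rule ccontr)
      assume "\<not> lin3 m dvd f3"
      from bm(2)[OF this] bl(2)[OF False] that card show False by linarith
    qed
    thus ?thesis using nu[of m] f2 by auto
  qed
  have "f2 dvd f3" if "card T = 8"
  proof -
    have "lin3 l dvd f3" "lin3 m dvd f3" "Tm \<noteq> {}" using that card bl bm by auto
    then obtain y where "y \<in> Tm" by blast
    hence "dot m y = 0" "dot l y \<noteq> 0" using on_m by (auto simp: Tm_def)
    thus ?thesis unfolding f2 using lin3_mult_dvd_if_dvd l m \<open>lin3 l dvd f3\<close> \<open>lin3 m dvd f3\<close> by blast
  qed
  thus ?thesis unfolding line_count_bounds_def using card bl bm common by auto
qed

lemma line_count_bounds_if_smooth:
  assumes k: "k \<noteq> 0" and MN: "inverse3 M N"
    and f2: "\<And>y0 y1 y2. ev f2 (appl M (y0, y1, y2)) = k * (y0 ^ 2 - y1 * y2)"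
    and T: "line_directions T"
  shows "line_count_bounds (card T)"
proof -
  have fin: "finite T" and np: "pairwise (\<lambda>x y. \<not> proportional x y) T"
    and zeros: "\<And>x. x \<in> T \<Longrightarrow> x \<noteq> (0, 0, 0) \<and> ev f2 x = 0 \<and> ev f3 x = 0 \<and> ev f4 x = 0"
    using T unfolding line_directions_def by auto
  have dvd: "f2 dvd f" if "homogeneous3 d f" "card T > d * 2" "\<And>x. x \<in> T \<Longrightarrow> ev f x = 0" for d f
    using vanishes_on_conic_if_many_zeros[OF MN k f2 that(1) fin that(2) np] zeros that(3)
    by (intro dvd_if_vanishes_on_conic[OF two MN k f2]) blast
  have le8: "card T \<le> 8"
  proof (rule ccontr)
    assume "\<not> card T \<le> 8"
    hence "f2 dvd f3" "f2 dvd f4" using dvd[OF h3] dvd[OF h4] zeros by auto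
    then obtain a b where "f3 = f2 * a" "f4 = f2 * b" by (elim dvdE)
    thus False using not_finite_sing_if_conic_divides[OF MN f2] isolated by blast
  qed
  have "f2 dvd f3" if "card T > 6" using dvd[OF h3] zeros that by auto
  moreover have "\<not> is_unit f2" by (rule not_unit_if_ev_eq_0[OF homogeneous3_vanishes_at_0[OF h2]]) simp
  ultimately show ?thesis unfolding line_count_bounds_def using le8 by auto
qed

lemma line_count_bounds_card: "line_directions T \<Longrightarrow> line_count_bounds (card T)"
  using quadric_classification[OF two h2 f2_nz] line_count_bounds_if_reducible line_count_bounds_if_smooth
  unfolding product_of_linear_forms_def equivalent_to_normal_conic_def by blast

lemma line_contained_iff:
  "(\<forall>z t. eval4 (quartic f2 f3 f4) (t * a0, t * a1, t * a2, z) = 0) \<longleftrightarrow>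
     ev f2 (a0, a1, a2) = 0 \<and> ev f3 (a0, a1, a2) = 0 \<and> ev f4 (a0, a1, a2) = 0"
proof
  assume "\<forall>z t. eval4 (quartic f2 f3 f4) (t * a0, t * a1, t * a2, z) = 0"
  hence "eval4 (quartic f2 f3 f4) (1 * a0, 1 * a1, 1 * a2, z) = 0" for z by blast
  hence "poly [:ev f4 (a0, a1, a2), ev f3 (a0, a1, a2), ev f2 (a0, a1, a2):] z = 0" for z
    unfolding eval4_quartic by (simp add: algebra_simps power2_eq_square)
  hence "[:ev f4 (a0, a1, a2), ev f3 (a0, a1, a2), ev f2 (a0, a1, a2):] = 0"
    by (intro poly_eq_0_if_cofinite_roots[of "{}"]) auto
  thus "ev f2 (a0, a1, a2) = 0 \<and> ev f3 (a0, a1, a2) = 0 \<and> ev f4 (a0, a1, a2) = 0" by simp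
next
  assume "ev f2 (a0, a1, a2) = 0 \<and> ev f3 (a0, a1, a2) = 0 \<and> ev f4 (a0, a1, a2) = 0"
  thus "\<forall>z t. eval4 (quartic f2 f3 f4) (t * a0, t * a1, t * a2, z) = 0"
    using homogeneous3_scale[OF h2, of _ "(a0, a1, a2)"] homogeneous3_scale[OF h3, of _ "(a0, a1, a2)"]
      homogeneous3_scale[OF h4, of _ "(a0, a1, a2)"] by (intro allI) (simp only: eval4_quartic, simp)
qed

lemma lines_through_P_eq:
  "lines_through_P (quartic f2 f3 f4) =
     line_of ` {x. x \<noteq> (0, 0, 0) \<and> ev f2 x = 0 \<and> ev f3 x = 0 \<and> ev f4 x = 0}"
proof -
  have span: "span2 P0 (a0, a1, a2, a3) = line_of (a0, a1, a2)" for a0 a1 a2 a3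
    by (simp add: line_of_def point4_def span2_P0)
  have contained: "(\<forall>w\<in>line_of (a0, a1, a2). eval4 (quartic f2 f3 f4) w = 0) \<longleftrightarrow>
      ev f2 (a0, a1, a2) = 0 \<and> ev f3 (a0, a1, a2) = 0 \<and> ev f4 (a0, a1, a2) = 0" for a0 a1 a2
    unfolding span[symmetric, of _ _ _ 0] span2_P0 line_contained_iff[symmetric] by blast
  show ?thesis
  proof (intro set_eqI iffI)
    fix L assume "L \<in> lines_through_P (quartic f2 f3 f4)"
    then obtain u where L: "L = span2 P0 u" "lin_indep2 P0 u" "\<forall>w\<in>L. eval4 (quartic f2 f3 f4) w = 0"
      unfolding lines_through_P_def by blast
    obtain a0 a1 a2 a3 where u: "u = (a0, a1, a2, a3)" by (cases u)
    have "L = line_of (a0, a1, a2)" using L(1) span u by simp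
    moreover have "(a0, a1, a2) \<noteq> (0, 0, 0)" using L(2) u lin_indep2_P0_iff by blast
    moreover have "ev f2 (a0, a1, a2) = 0 \<and> ev f3 (a0, a1, a2) = 0 \<and> ev f4 (a0, a1, a2) = 0"
      using L(3) contained calculation(1) by blast
    ultimately show "L \<in> line_of ` {x. x \<noteq> (0, 0, 0) \<and> ev f2 x = 0 \<and> ev f3 x = 0 \<and> ev f4 x = 0}"
      by blast
  next
    fix L assume "L \<in> line_of ` {x. x \<noteq> (0, 0, 0) \<and> ev f2 x = 0 \<and> ev f3 x = 0 \<and> ev f4 x = 0}"
    then obtain x where L: "L = line_of x" "x \<noteq> (0, 0, 0)" "ev f2 x = 0 \<and> ev f3 x = 0 \<and> ev f4 x = 0"
      by blast
    obtain a0 a1 a2 where x: "x = (a0, a1, a2)" by (rule v3_cases)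
    have "L = span2 P0 (a0, a1, a2, 0)" using L(1) x by (simp only: span)
    moreover have "lin_indep2 P0 (a0, a1, a2, 0)" using L(2) x lin_indep2_P0_iff by blast
    moreover have "\<forall>w\<in>L. eval4 (quartic f2 f3 f4) w = 0" using L(1,3) x contained by blast
    ultimately show "L \<in> lines_through_P (quartic f2 f3 f4)" unfolding lines_through_P_def by blast
  qed
qed

lemma line_directions_of_lines:
  assumes "Ls \<subseteq> lines_through_P (quartic f2 f3 f4)" and "finite Ls"
  obtains T where "line_directions T" and "card T = card Ls"
proof -
  let ?Z = "{x. x \<noteq> (0, 0, 0) \<and> ev f2 x = 0 \<and> ev f3 x = 0 \<and> ev f4 x = 0}"
  have "\<forall>L\<in>Ls. \<exists>x. x \<in> ?Z \<and> L = line_of x" using assms(1) lines_through_P_eq by blast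
  hence "\<exists>rep. \<forall>L\<in>Ls. rep L \<in> ?Z \<and> L = line_of (rep L)" by (rule bchoice)
  then obtain rep where rep: "\<forall>L\<in>Ls. rep L \<in> ?Z \<and> L = line_of (rep L)" by blast
  have inj: "inj_on rep Ls"
  proof (rule inj_onI)
    fix L1 L2 assume "L1 \<in> Ls" "L2 \<in> Ls" "rep L1 = rep L2"
    thus "L1 = L2" using rep by metis
  qed
  have "\<not> proportional (rep L1) (rep L2)" if "L1 \<in> Ls" "L2 \<in> Ls" "rep L1 \<noteq> rep L2" for L1 L2
  proof
    assume "proportional (rep L1) (rep L2)"
    hence "line_of (rep L1) = line_of (rep L2)" using rep that by (intro line_of_proportional) auto
    thus False using rep that by auto
  qed
  hence "pairwise (\<lambda>x y. \<not> proportional x y) (rep ` Ls)" unfolding pairwise_def by blast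
  hence "line_directions (rep ` Ls)" unfolding line_directions_def using assms(2) rep by auto
  thus ?thesis using that inj by (simp add: card_image)
qed

lemma lines_through_P_bounds:
  "finite (lines_through_P (quartic f2 f3 f4)) \<and> line_count_bounds (card (lines_through_P (quartic f2 f3 f4)))"
proof -
  have fin: "finite (lines_through_P (quartic f2 f3 f4))"
  proof (rule ccontr)
    assume "infinite (lines_through_P (quartic f2 f3 f4))"
    then obtain Ls where Ls: "Ls \<subseteq> lines_through_P (quartic f2 f3 f4)" "finite Ls" "card Ls = 9"
      by (meson infinite_arbitrarily_large)
    obtain T where "line_directions T" "card T = card Ls" by (rule line_directions_of_lines[OF Ls(1,2)])
    thus False using line_count_bounds_card[of T] Ls(3) unfolding line_count_bounds_def by simp
  qed
  obtain T where "line_directions T" "card T = card (lines_through_P (quartic f2 f3 f4))"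
    by (rule line_directions_of_lines[OF subset_refl fin])
  thus ?thesis using fin line_count_bounds_card[of T] by simp
qed

end

theorem lemma1p7:
  fixes f2 f3 f4 :: "'k::alg_closed_field pol3"
  assumes char2: "CHAR('k) \<noteq> 2" and char3: "CHAR('k) \<noteq> 3"
    and h2: "homogeneous3 2 f2" and h3: "homogeneous3 3 f3" and h4: "homogeneous3 4 f4"
    and f2_nz: "f2 \<noteq> 0"
    and isolated: "finite_sing (quartic f2 f3 f4)"
    and double: "\<forall>w\<in>sing_vecs (quartic f2 f3 f4). double_point (quartic f2 f3 f4) w"
  shows "finite (lines_through_P (quartic f2 f3 f4))
         \<and> card (lines_through_P (quartic f2 f3 f4)) \<le> 8
         \<and> (card (lines_through_P (quartic f2 f3 f4)) > 6 \<longrightarrow>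
              (\<exists>g. \<not> is_unit g \<and> g dvd f2 \<and> g dvd f3))
         \<and> (card (lines_through_P (quartic f2 f3 f4)) = 8 \<longrightarrow> f2 dvd f3)"
proof -
  interpret quartic_double_point f2 f3 f4
    using two_neq_zero_if_CHAR_neq_2[OF char2] h2 h3 h4 f2_nz isolated by unfold_locales
  show ?thesis using lines_through_P_bounds unfolding line_count_bounds_def by blast
qed

end
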